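(* Let $m\ge2$ and $\Gamma=\Gamma_{SD_{8m}}$. (1) If $m$ is even: $\mathrm{Spec}(\Gamma)=\{[0]^{2m-2},[-1]^1,[\tfrac{1+\sqrt{16m-7}}{2}]^1,[\tfrac{1-\sqrt{16m-7}}{2}]^1\}$, $E(\Gamma)=1+\sqrt{16m-7}$; $\mathrm{L\text{-}Spec}(\Gamma)=\{[0]^1,[2]^{2m-2},[2m+1]^2\}$, $LE(\Gamma)=\frac{4(2m-1)(2m-2)}{2m+1}+4$; $\mathrm{Q\text{-}Spec}(\Gamma)=\{[2]^{2m-2},[2m-1]^1,[\tfrac{2m+3+\sqrt{(2m-1)(2m+7)}}{2}]^1,[\tfrac{2m+3-\sqrt{(2m-1)(2m+7)}}{2}]^1\}$, $SE(\Gamma)=\frac{4(2m-1)(2m-2)}{2m+1}+(2m-1)(\sqrt{1+\frac{8}{2m-1}}-1)$. (2) If $m$ is odd: $\mathrm{Spec}(\Gamma)=\{[0]^{2m},[4\sqrt{\tfrac{m-1}{2}}]^1,[-4\sqrt{\tfrac{m-1}{2}}]^1\}$, $E(\Gamma)=8\sqrt{\frac{m-1}{2}}$; $\mathrm{L\text{-}Spec}(\Gamma)=\mathrm{Q\text{-}Spec}(\Gamma)=\{[0]^1,[4]^{2m-3},[2(m-1)]^3,[2(m+1)]^1\}$, $LE(\Gamma)=SE(\Gamma)=\frac{16(m-1)(m-3)}{m+1}+8$.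
   Context: $SD_{8m}=\langle x,y\mid x^{4m}=y^2=1,\ yxy=x^{2m-1}\rangle$. For a finite non-abelian group $G$ with center $Z(G)$, the NCCC-graph $\Gamma_G$ has vertex set $\{x^G: x\in G\setminus Z(G)\}$ ($x^G$ the conjugacy class of $x$), distinct vertices $x^G,y^G$ adjacent iff $x'y'\neq y'x'$ for all $x'\in x^G,y'\in y^G$. For a simple graph with adjacency matrix $A$, degree matrix $D$, $L=D-A$, $Q=D+A$; Spec, L-Spec, Q-Spec are eigenvalue multisets of $A,L,Q$, $[\lambda]^k$ meaning eigenvalue $\lambda$ of multiplicity $k$. $E=\sum_{\lambda\in\mathrm{Spec}}|\lambda|$; with $\Delta=2|E(\mathcal G)|/|V(\mathcal G)|$, $LE=\sum_{\beta\in\mathrm{L\text{-}Spec}}|\beta-\Delta|$, $SE=\sum_{\gamma\in\mathrm{Q\text{-}Spec}}|\gamma-\Delta|$. *)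

theory Defs
  imports "HOL-Algebra.Group" "Jordan_Normal_Form.Char_Poly"
begin

definition grp_center :: "('a, 'b) monoid_scheme \<Rightarrow> 'a set" where
  "grp_center G = {z \<in> carrier G. \<forall>g \<in> carrier G. z \<otimes>\<^bsub>G\<^esub> g = g \<otimes>\<^bsub>G\<^esub> z}"

definition conj_class :: "('a, 'b) monoid_scheme \<Rightarrow> 'a \<Rightarrow> 'a set" where
  "conj_class G x = {g \<otimes>\<^bsub>G\<^esub> x \<otimes>\<^bsub>G\<^esub> inv\<^bsub>G\<^esub> g | g. g \<in> carrier G}"

definition nccc_vertices :: "('a, 'b) monoid_scheme \<Rightarrow> 'a set set" where
  "nccc_vertices G = conj_class G ` (carrier G - grp_center G)"

definition nccc_adj :: "('a, 'b) monoid_scheme \<Rightarrow> 'a set \<Rightarrow> 'a set \<Rightarrow> bool" where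
  "nccc_adj G X Y \<longleftrightarrow> X \<noteq> Y \<and>
     (\<forall>x' \<in> X. \<forall>y' \<in> Y. x' \<otimes>\<^bsub>G\<^esub> y' \<noteq> y' \<otimes>\<^bsub>G\<^esub> x')"

text \<open>Concrete model: the pair (i, b) stands for x^i y^(if b then 1 else 0), with
  i taken modulo 4m.  Since y x^j y = x^((2m-1) j), the product is
  (x^i y^a)(x^j y^b) = x^(i + (2m-1)^a j) y^(a+b).\<close>

definition SD :: "nat \<Rightarrow> (int \<times> bool) monoid" where
  "SD m = \<lparr> carrier = {0..<4 * int m} \<times> UNIV,
            mult = (\<lambda>(i, a) (j, b).
               ((i + (if a then (2 * int m - 1) * j else j)) mod (4 * int m), a \<noteq> b)),
            one = (0, False) \<rparr>"

definition SD_x :: "(int \<times> bool)" where "SD_x = (1, False)"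
definition SD_y :: "(int \<times> bool)" where "SD_y = (0, True)"

text \<open>An enumeration of the vertex set; the spectra below do not depend on the choice.\<close>
definition venum :: "'v set \<Rightarrow> nat \<Rightarrow> 'v" where
  "venum V = (SOME f. bij_betw f {..<card V} V)"

definition gdeg :: "'v set \<Rightarrow> ('v \<Rightarrow> 'v \<Rightarrow> bool) \<Rightarrow> 'v \<Rightarrow> nat" where
  "gdeg V adj v = card {w \<in> V. adj v w}"

definition adj_mat :: "'v set \<Rightarrow> ('v \<Rightarrow> 'v \<Rightarrow> bool) \<Rightarrow> real mat" where
  "adj_mat V adj = mat (card V) (card V)
     (\<lambda>(i, j). if adj (venum V i) (venum V j) then 1 else 0)"

definition deg_mat :: "'v set \<Rightarrow> ('v \<Rightarrow> 'v \<Rightarrow> bool) \<Rightarrow> real mat" where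
  "deg_mat V adj = mat (card V) (card V)
     (\<lambda>(i, j). if i = j then real (gdeg V adj (venum V i)) else 0)"

definition lap_mat :: "'v set \<Rightarrow> ('v \<Rightarrow> 'v \<Rightarrow> bool) \<Rightarrow> real mat" where
  "lap_mat V adj = deg_mat V adj - adj_mat V adj"

definition slap_mat :: "'v set \<Rightarrow> ('v \<Rightarrow> 'v \<Rightarrow> bool) \<Rightarrow> real mat" where
  "slap_mat V adj = deg_mat V adj + adj_mat V adj"

text \<open>Multiset of eigenvalues (with algebraic multiplicity) of a real square matrix whose
  characteristic polynomial splits over the reals (true for symmetric matrices).\<close>
definition spec_mset :: "real mat \<Rightarrow> real multiset" where
  "spec_mset A = (THE M. char_poly A = (\<Prod>a\<in>#M. [:- a, 1:]))"

definition gspec :: "'v set \<Rightarrow> ('v \<Rightarrow> 'v \<Rightarrow> bool) \<Rightarrow> real multiset" where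
  "gspec V adj = spec_mset (adj_mat V adj)"
definition lspec :: "'v set \<Rightarrow> ('v \<Rightarrow> 'v \<Rightarrow> bool) \<Rightarrow> real multiset" where
  "lspec V adj = spec_mset (lap_mat V adj)"
definition qspec :: "'v set \<Rightarrow> ('v \<Rightarrow> 'v \<Rightarrow> bool) \<Rightarrow> real multiset" where
  "qspec V adj = spec_mset (slap_mat V adj)"

definition num_edges :: "'v set \<Rightarrow> ('v \<Rightarrow> 'v \<Rightarrow> bool) \<Rightarrow> nat" where
  "num_edges V adj = card {{u, w} | u w. u \<in> V \<and> w \<in> V \<and> adj u w}"

definition avg_deg :: "'v set \<Rightarrow> ('v \<Rightarrow> 'v \<Rightarrow> bool) \<Rightarrow> real" where
  "avg_deg V adj = 2 * real (num_edges V adj) / real (card V)"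

definition energy :: "'v set \<Rightarrow> ('v \<Rightarrow> 'v \<Rightarrow> bool) \<Rightarrow> real" where
  "energy V adj = (\<Sum>e\<in>#gspec V adj. \<bar>e\<bar>)"

definition lap_energy :: "'v set \<Rightarrow> ('v \<Rightarrow> 'v \<Rightarrow> bool) \<Rightarrow> real" where
  "lap_energy V adj = (\<Sum>\<beta>\<in>#lspec V adj. \<bar>\<beta> - avg_deg V adj\<bar>)"

definition slap_energy :: "'v set \<Rightarrow> ('v \<Rightarrow> 'v \<Rightarrow> bool) \<Rightarrow> real" where
  "slap_energy V adj = (\<Sum>\<gamma>\<in>#qspec V adj. \<bar>\<gamma> - avg_deg V adj\<bar>)"

end

theory Submission
  imports Defs
begin

text \<open>The centre of \<open>SD\<^sub>8\<^sub>m\<close> consists of the rotations \<open>x\<^sup>j\<close> with \<open>2m | j\<close> (\<open>m\<close> even) or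
  \<open>m | j\<close> (\<open>m\<close> odd). The non-central classes are the pairs \<open>{x\<^sup>j, x\<^bsup>(2m-1)j\<^esup>}\<close> of
  non-central rotations and the classes of reflections \<open>x\<^sup>iy\<close> with \<open>i\<close> fixed modulo 2 (\<open>m\<close> even)
  or 4 (\<open>m\<close> odd). Rotations commute with each other, a non-central rotation commutes with no
  reflection, and two reflections in different classes never commute for even \<open>m\<close>, while for
  odd \<open>m\<close> every two reflection classes contain commuting elements (Chinese remainder theorem).
  So the NCCC-graph is the join of a complete (\<open>m\<close> even) or edgeless (\<open>m\<close> odd) graph on the
  2 or 4 reflection classes with an edgeless graph on the rotation classes.

  The adjacency matrix, Laplacian and signless Laplacian of such a join are constant on the
  blocks of the partition. A matrix of this shape has eigenvalues \<open>dS - \<alpha>\<close> and \<open>dT - \<beta>\<close>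
  (diagonal entry minus off-diagonal entry of each block) with multiplicities \<open>|S| - 1\<close> and
  \<open>|T| - 1\<close>, and the two eigenvalues of its \<open>2 \<times> 2\<close> quotient matrix; we exhibit the eigenbasis
  and its inverse explicitly. The energies are then finite sums.\<close>

section \<open>Spectra of two-block matrices\<close>

lemma order_linear_factor: "order a [:-x, 1::'a::idom:] = (if a = x then 1 else 0)"
proof (cases "a = x")
  case True
  then show ?thesis using order_power_n_n[of x 1] by simp
next
  case False
  then show ?thesis by (auto intro!: order_0I)
qed

lemma order_prod_mset_linear_factors:
  "order a (\<Prod>x\<in>#X. [:-x, 1::'a::idom:]) = count X a"
proof (induction X)
  case empty
  then show ?case by (simp add: order_0I)
next
  case (add x X)
  have "(\<Prod>x\<in>#X. [:-x, 1::'a:]) \<noteq> 0"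
    by (auto simp: prod_mset_zero_iff)
  then have "[:-x, 1:] * (\<Prod>x\<in>#X. [:-x, 1::'a:]) \<noteq> 0"
    by (simp del: mult_pCons_left)
  from order_mult[OF this, of a] show ?case
    using add by (simp only: prod_mset.add_mset order_linear_factor) simp
qed

lemma spec_mset_eqI:
  assumes "char_poly A = (\<Prod>x\<in>#X. [:-x, 1:])"
  shows "spec_mset A = X"
  unfolding spec_mset_def
proof (rule the_equality)
  fix Y assume "char_poly A = (\<Prod>x\<in>#Y. [:-x, 1:])"
  then have "order a (\<Prod>x\<in>#Y. [:-x, 1:]) = order a (\<Prod>x\<in>#X. [:-x, 1:])" for a
    using assms by simp
  then show "Y = X" by (simp add: order_prod_mset_linear_factors multiset_eqI)
qed (rule assms)

lemma char_poly_eq_if_diagonalised: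
  fixes M P Q :: "'a::field mat"
  assumes M: "M \<in> carrier_mat n n" and P: "P \<in> carrier_mat n n" and Q: "Q \<in> carrier_mat n n"
    and QP: "Q * P = 1\<^sub>m n" and MP: "M * P = P * mat_diag n d"
  shows "char_poly M = (\<Prod>i<n. [:- d i, 1:])"
proof -
  have PQ: "P * Q = 1\<^sub>m n" using mat_mult_left_right_inverse[OF Q P QP] .
  have "M = M * (P * Q)" using M PQ by simp
  also have "\<dots> = M * P * Q" using M P Q by (simp add: assoc_mult_mat)
  also have "\<dots> = P * mat_diag n d * Q" using MP by simp
  finally have "similar_mat M (mat_diag n d)"
    using M P Q PQ QP by (intro similar_matI) auto
  then have "char_poly M = char_poly (mat_diag n d)" by (rule char_poly_similar)
  also have "\<dots> = (\<Prod>a\<leftarrow>diag_mat (mat_diag n d). [:-a, 1:])"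
    by (rule char_poly_upper_triangular) (auto simp: upper_triangular_def mat_diag_def)
  also have "diag_mat (mat_diag n d) = map d [0..<n]"
    by (simp add: diag_mat_def mat_diag_def)
  finally show ?thesis
    by (simp add: comp_def prod.distinct_set_conv_list[symmetric] atLeast0LessThan)
qed

definition two_block_mat :: "nat \<Rightarrow> nat set \<Rightarrow> real \<Rightarrow> real \<Rightarrow> real \<Rightarrow> real \<Rightarrow> real \<Rightarrow> real mat" where
  "two_block_mat n S dS dT \<alpha> \<beta> \<gamma> = mat n n (\<lambda>(i, j).
     if i = j then (if i \<in> S then dS else dT)
     else if i \<in> S \<and> j \<in> S then \<alpha> else if i \<notin> S \<and> j \<notin> S then \<beta> else \<gamma>)"

lemma two_block_mat_carrier: "two_block_mat n S dS dT \<alpha> \<beta> \<gamma> \<in> carrier_mat n n"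
  by (simp add: two_block_mat_def)

lemma index_two_block_mat:
  "i < n \<Longrightarrow> j < n \<Longrightarrow> two_block_mat n S dS dT \<alpha> \<beta> \<gamma> $$ (i, j) =
     (if i = j then (if i \<in> S then dS else dT)
      else if i \<in> S \<and> j \<in> S then \<alpha> else if i \<notin> S \<and> j \<notin> S then \<beta> else \<gamma>)"
  by (simp add: two_block_mat_def)

lemma index_mult_mat_sum:
  fixes A B :: "'a::comm_semiring_0 mat"
  assumes "A \<in> carrier_mat n n" "B \<in> carrier_mat n n" "i < n" "k < n"
  shows "(A * B) $$ (i, k) = (\<Sum>j<n. A $$ (i, j) * B $$ (j, k))"
  using assms by (simp add: scalar_prod_def atLeast0LessThan)

text \<open>With \<open>T = {..<n} - S\<close>, let \<open>(a1, b1)\<close> and \<open>(a2, b2)\<close> be eigenvectors for \<open>l1\<close> and \<open>l2\<close>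
  of the quotient matrix \<open>[[dS + (|S| - 1) \<alpha>, |T| \<gamma>], [|S| \<gamma>, dT + (|T| - 1) \<beta>]]\<close>, and let
  \<open>[[c11, c12], [c21, c22]]\<close> be the inverse of \<open>[[a1, a2], [b1, b2]]\<close>. The eigenbasis has the two
  lifted eigenvectors in columns \<open>s0\<close> and \<open>t0\<close> and \<open>e\<^sub>k - e\<^sub>s\<^sub>0\<close> (\<open>k \<in> S\<close>), \<open>e\<^sub>k - e\<^sub>t\<^sub>0\<close>
  (\<open>k \<in> T\<close>) in the other columns.\<close>

locale two_block_eigenbasis =
  fixes n :: nat and S :: "nat set" and s0 t0 :: nat
    and dS dT \<alpha> \<beta> \<gamma> l1 l2 a1 b1 a2 b2 c11 c12 c21 c22 :: real
  assumes S_subset: "S \<subseteq> {..<n}" and s0: "s0 \<in> S" and t0: "t0 < n" "t0 \<notin> S"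
  assumes eigvec1:
      "(dS + (real (card S) - 1) * \<alpha>) * a1 + real (card ({..<n} - S)) * \<gamma> * b1 = l1 * a1"
      "real (card S) * \<gamma> * a1 + (dT + (real (card ({..<n} - S)) - 1) * \<beta>) * b1 = l1 * b1"
    and eigvec2:
      "(dS + (real (card S) - 1) * \<alpha>) * a2 + real (card ({..<n} - S)) * \<gamma> * b2 = l2 * a2"
      "real (card S) * \<gamma> * a2 + (dT + (real (card ({..<n} - S)) - 1) * \<beta>) * b2 = l2 * b2"
    and inverse:
      "c11 * a1 + c12 * b1 = 1" "c11 * a2 + c12 * b2 = 0"
      "c21 * a1 + c22 * b1 = 0" "c21 * a2 + c22 * b2 = 1"
begin

abbreviation "T \<equiv> {..<n} - S"

definition basis :: "nat \<Rightarrow> nat \<Rightarrow> real" where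
  "basis j k =
     (if k = s0 then (if j \<in> S then a1 else b1)
      else if k = t0 then (if j \<in> S then a2 else b2)
      else of_bool (j = k) - of_bool (j = (if k \<in> S then s0 else t0)))"

definition basis_inv :: "nat \<Rightarrow> nat \<Rightarrow> real" where
  "basis_inv i j =
     (if i = s0 then (if j \<in> S then c11 / card S else c12 / card T)
      else if i = t0 then (if j \<in> S then c21 / card S else c22 / card T)
      else of_bool (j = i)
        - (if i \<in> S then (if j \<in> S then 1 / card S else 0) else (if j \<notin> S then 1 / card T else 0)))"

definition eigval :: "nat \<Rightarrow> real" where
  "eigval k = (if k = s0 then l1 else if k = t0 then l2 else if k \<in> S then dS - \<alpha> else dT - \<beta>)"

lemma finite_S: "finite S"
  using S_subset finite_subset by blast

lemma t0_T: "t0 \<in> T"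
  using t0 by auto

lemma s0_neq_t0: "s0 \<noteq> t0"
  using s0 t0 by auto

lemma card_S_pos: "real (card S) > 0"
  using s0 finite_S by (auto simp: card_gt_0_iff)

lemma card_T_pos: "real (card T) > 0"
  using t0_T by (auto simp: card_gt_0_iff)

lemma sum_lessThan_split: "(\<Sum>j<n. g j) = (\<Sum>j\<in>S. g j) + (\<Sum>j\<in>T. g j)"
  using sum.subset_diff[of S "{..<n}" g] S_subset by (simp add: add.commute)

lemma two_block_row_sum:
  assumes "i < n"
  shows "(\<Sum>j<n. two_block_mat n S dS dT \<alpha> \<beta> \<gamma> $$ (i, j) * v j) =
    (if i \<in> S then (dS - \<alpha>) * v i + \<alpha> * (\<Sum>j\<in>S. v j) + \<gamma> * (\<Sum>j\<in>T. v j)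
     else (dT - \<beta>) * v i + \<beta> * (\<Sum>j\<in>T. v j) + \<gamma> * (\<Sum>j\<in>S. v j))"
proof -
  let ?M = "two_block_mat n S dS dT \<alpha> \<beta> \<gamma>"
  have S_lt: "j \<in> S \<Longrightarrow> j < n" for j using S_subset by auto
  show ?thesis
  proof (cases "i \<in> S")
    case True
    have "(\<Sum>j\<in>S. ?M $$ (i, j) * v j) = dS * v i + (\<Sum>j\<in>S-{i}. \<alpha> * v j)"
      using True finite_S assms S_lt by (simp add: sum.remove[of S i] index_two_block_mat)
    moreover have "(\<Sum>j\<in>S-{i}. \<alpha> * v j) = \<alpha> * ((\<Sum>j\<in>S. v j) - v i)"
      using True finite_S by (simp add: sum_distrib_left[symmetric] sum_diff1)
    moreover have "(\<Sum>j\<in>T. ?M $$ (i, j) * v j) = (\<Sum>j\<in>T. \<gamma> * v j)"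
      using True assms by (intro sum.cong) (auto simp: index_two_block_mat)
    ultimately show ?thesis
      using True by (simp add: sum_lessThan_split sum_distrib_left[symmetric] algebra_simps)
  next
    case False
    then have iT: "i \<in> T" using assms by auto
    have "(\<Sum>j\<in>T. ?M $$ (i, j) * v j) = dT * v i + (\<Sum>j\<in>T-{i}. \<beta> * v j)"
      using iT by (simp add: sum.remove[of T i] index_two_block_mat)
    moreover have "(\<Sum>j\<in>T-{i}. \<beta> * v j) = \<beta> * ((\<Sum>j\<in>T. v j) - v i)"
      using iT by (simp add: sum_distrib_left[symmetric] sum_diff1)
    moreover have "(\<Sum>j\<in>S. ?M $$ (i, j) * v j) = (\<Sum>j\<in>S. \<gamma> * v j)"
      using False assms S_lt by (intro sum.cong) (auto simp: index_two_block_mat)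
    ultimately show ?thesis
      using False by (simp add: sum_lessThan_split sum_distrib_left[symmetric] algebra_simps)
  qed
qed

lemma basis_col_sum_S:
  "(\<Sum>j\<in>S. basis j k) = (if k = s0 then card S * a1 else if k = t0 then card S * a2 else 0)"
proof -
  have "(\<Sum>j\<in>S. of_bool (j = k) - of_bool (j = (if k \<in> S then s0 else t0)) :: real) = 0"
    using finite_S s0 t0 by (simp add: sum_subtractf)
  then show ?thesis using s0_neq_t0 by (simp add: basis_def)
qed

lemma basis_col_sum_T:
  assumes "k < n"
  shows "(\<Sum>j\<in>T. basis j k) = (if k = s0 then card T * b1 else if k = t0 then card T * b2 else 0)"
proof -
  have "(\<Sum>j\<in>T. of_bool (j = k) - of_bool (j = (if k \<in> S then s0 else t0)) :: real) = 0"
    if "k \<noteq> s0" "k \<noteq> t0"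
    using s0 t0_T assms by (simp add: sum_subtractf)
  then show ?thesis using s0_neq_t0 by (simp add: basis_def)
qed

lemma basis_inv_row_sum:
  assumes "i < n"
  shows "(\<Sum>j<n. basis_inv i j * v j) =
    (if i = s0 then c11 / card S * (\<Sum>j\<in>S. v j) + c12 / card T * (\<Sum>j\<in>T. v j)
     else if i = t0 then c21 / card S * (\<Sum>j\<in>S. v j) + c22 / card T * (\<Sum>j\<in>T. v j)
     else if i \<in> S then v i - (\<Sum>j\<in>S. v j) / card S else v i - (\<Sum>j\<in>T. v j) / card T)"
proof -
  consider "i = s0" | "i = t0" | "i \<noteq> s0" "i \<noteq> t0" "i \<in> S" | "i \<noteq> s0" "i \<noteq> t0" "i \<in> T"
    using assms by blast
  then show ?thesis
  proof cases
    case 1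
    then show ?thesis
      by (simp add: sum_lessThan_split basis_inv_def sum_distrib_left)
  next
    case 2
    then show ?thesis
      using s0_neq_t0 t0 by (simp add: sum_lessThan_split basis_inv_def sum_distrib_left)
  next
    case 3
    then have "(\<Sum>j\<in>S. basis_inv i j * v j) = (\<Sum>j\<in>S. of_bool (j = i) * v j - v j / card S)"
      "(\<Sum>j\<in>T. basis_inv i j * v j) = 0"
      by (auto intro!: sum.cong sum.neutral simp: basis_inv_def algebra_simps)
    then show ?thesis
      using 3 finite_S by (simp add: sum_lessThan_split sum_subtractf sum_divide_distrib[symmetric])
  next
    case 4
    then have "(\<Sum>j\<in>T. basis_inv i j * v j) = (\<Sum>j\<in>T. of_bool (j = i) * v j - v j / card T)"
      "(\<Sum>j\<in>S. basis_inv i j * v j) = 0"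
      by (auto intro!: sum.cong sum.neutral simp: basis_inv_def algebra_simps)
    then show ?thesis
      using 4 by (simp add: sum_lessThan_split sum_subtractf sum_divide_distrib[symmetric])
  qed
qed

lemma basis_inv_basis:
  assumes "i < n" "k < n"
  shows "(\<Sum>j<n. basis_inv i j * basis j k) = of_bool (i = k)"
  unfolding basis_inv_row_sum[OF assms(1)] basis_col_sum_S basis_col_sum_T[OF assms(2)]
  using s0_neq_t0 card_S_pos card_T_pos inverse s0 t0 assms by (auto simp: basis_def)

lemma two_block_basis:
  assumes "i < n" "k < n"
  shows "(\<Sum>j<n. two_block_mat n S dS dT \<alpha> \<beta> \<gamma> $$ (i, j) * basis j k) = basis i k * eigval k"
  unfolding two_block_row_sum[OF assms(1)] basis_col_sum_S basis_col_sum_T[OF assms(2)]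
  using s0_neq_t0 eigvec1 eigvec2 s0 t0 assms by (auto simp: basis_def eigval_def algebra_simps)

lemma char_poly_two_block_mat:
  "char_poly (two_block_mat n S dS dT \<alpha> \<beta> \<gamma>) = (\<Prod>k<n. [:- eigval k, 1:])"
proof (rule char_poly_eq_if_diagonalised)
  let ?M = "two_block_mat n S dS dT \<alpha> \<beta> \<gamma>"
  let ?P = "mat n n (\<lambda>(j, k). basis j k)"
  let ?Q = "mat n n (\<lambda>(i, j). basis_inv i j)"
  show "?M \<in> carrier_mat n n" "?P \<in> carrier_mat n n" "?Q \<in> carrier_mat n n"
    by (auto simp: two_block_mat_carrier)
  show "?Q * ?P = 1\<^sub>m n"
  proof (rule eq_matI)
    fix i k assume "i < dim_row (1\<^sub>m n :: real mat)" "k < dim_col (1\<^sub>m n :: real mat)"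
    then have ik: "i < n" "k < n" by auto
    then have "(?Q * ?P) $$ (i, k) = (\<Sum>j<n. ?Q $$ (i, j) * ?P $$ (j, k))"
      by (intro index_mult_mat_sum) auto
    also have "\<dots> = (\<Sum>j<n. basis_inv i j * basis j k)"
      using ik by (intro sum.cong) auto
    also have "\<dots> = 1\<^sub>m n $$ (i, k)" using ik by (simp add: basis_inv_basis)
    finally show "(?Q * ?P) $$ (i, k) = 1\<^sub>m n $$ (i, k)" .
  qed auto
  show "?M * ?P = ?P * mat_diag n eigval"
  proof (rule eq_matI)
    fix i k assume "i < dim_row (?P * mat_diag n eigval)" "k < dim_col (?P * mat_diag n eigval)"
    then have ik: "i < n" "k < n" by (auto simp: mat_diag_def)
    then have "(?M * ?P) $$ (i, k) = (\<Sum>j<n. ?M $$ (i, j) * ?P $$ (j, k))"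
      by (intro index_mult_mat_sum) (auto simp: two_block_mat_carrier)
    also have "\<dots> = (\<Sum>j<n. ?M $$ (i, j) * basis j k)"
      using ik by (intro sum.cong) auto
    also have "\<dots> = basis i k * eigval k" using ik by (rule two_block_basis)
    also have "\<dots> = (?P * mat_diag n eigval) $$ (i, k)"
      using ik by (subst mat_diag_mult_right[of _ n]) auto
    finally show "(?M * ?P) $$ (i, k) = (?P * mat_diag n eigval) $$ (i, k)" .
  qed (auto simp: mat_diag_def two_block_mat_def)
qed

lemma prod_eigval:
  "(\<Prod>k<n. [:- eigval k, 1:]) = (\<Prod>x\<in>#{#l1, l2#} + replicate_mset (card S - 1) (dS - \<alpha>)
     + replicate_mset (card T - 1) (dT - \<beta>). [:-x, 1:])"
proof -
  let ?f = "\<lambda>k. [:- eigval k, 1:]"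
  have fin: "finite (S - {s0})" "finite (T - {t0})"
    using finite_S by auto
  have split: "{..<n} = insert s0 (insert t0 ((S - {s0}) \<union> (T - {t0})))"
    using S_subset s0 t0 by auto
  have "(\<Prod>k<n. ?f k) = prod ?f (insert s0 (insert t0 ((S - {s0}) \<union> (T - {t0}))))"
    by (rule arg_cong[OF split])
  also have "\<dots> = ?f s0 * (?f t0 * prod ?f ((S - {s0}) \<union> (T - {t0})))"
    using fin s0 t0 s0_neq_t0 by (simp del: mult_pCons_left)
  also have "prod ?f ((S - {s0}) \<union> (T - {t0})) = prod ?f (S - {s0}) * prod ?f (T - {t0})"
    using fin by (intro prod.union_disjoint) auto
  also have "prod ?f (S - {s0}) = (\<Prod>k\<in>S - {s0}. [:- (dS - \<alpha>), 1:])"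
    using t0 by (intro prod.cong) (auto simp: eigval_def)
  also have "prod ?f (T - {t0}) = (\<Prod>k\<in>T - {t0}. [:- (dT - \<beta>), 1:])"
    using s0 by (intro prod.cong) (auto simp: eigval_def)
  finally show ?thesis
    using s0 finite_S t0_T s0_neq_t0 by (simp add: eigval_def ac_simps del: mult_pCons_left)
qed

lemma spec_mset_eq:
  "spec_mset (two_block_mat n S dS dT \<alpha> \<beta> \<gamma>) =
     {#l1, l2#} + replicate_mset (card S - 1) (dS - \<alpha>) + replicate_mset (card T - 1) (dT - \<beta>)"
  by (rule spec_mset_eqI) (simp add: char_poly_two_block_mat prod_eigval)

end

lemma roots_of_trace_det:
  fixes p w c l1 l2 :: real
  assumes "l1 + l2 = p + w" and "l1 * l2 = p * w - c"
  shows "0 < c \<Longrightarrow> l1 \<noteq> l2"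
    and "l = l1 \<or> l = l2 \<Longrightarrow> l\<^sup>2 - (p + w) * l + (p * w - c) = 0"
proof -
  assume "0 < c"
  have "(l1 - l2)\<^sup>2 = (l1 + l2)\<^sup>2 - 4 * (l1 * l2)"
    by (simp add: power2_eq_square algebra_simps)
  also have "\<dots> = (p - w)\<^sup>2 + 4 * c"
    unfolding assms by (simp add: power2_eq_square algebra_simps)
  also have "\<dots> > 0"
    using \<open>0 < c\<close> by (simp add: add_nonneg_pos)
  finally show "l1 \<noteq> l2" by auto
next
  assume "l = l1 \<or> l = l2"
  moreover have "l\<^sup>2 - (p + w) * l + (p * w - c) = (l - l1) * (l - l2)"
    unfolding assms(1)[symmetric] assms(2)[symmetric] by (simp add: power2_eq_square algebra_simps)
  ultimately show "l\<^sup>2 - (p + w) * l + (p * w - c) = 0" by auto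
qed

lemma spec_mset_two_block_mat:
  fixes n :: nat and S :: "nat set" and dS dT \<alpha> \<beta> \<gamma> l1 l2 :: real
  defines "s \<equiv> real (card S)" and "t \<equiv> real (card ({..<n} - S))"
  defines "p \<equiv> dS + (s - 1) * \<alpha>" and "w \<equiv> dT + (t - 1) * \<beta>"
  assumes S: "S \<subseteq> {..<n}" "S \<noteq> {}" "{..<n} - S \<noteq> {}" and "\<gamma> \<noteq> 0"
    and sum: "l1 + l2 = p + w" and prod: "l1 * l2 = p * w - s * t * \<gamma>\<^sup>2"
  shows "spec_mset (two_block_mat n S dS dT \<alpha> \<beta> \<gamma>) =
     {#l1, l2#} + replicate_mset (card S - 1) (dS - \<alpha>)
       + replicate_mset (card ({..<n} - S) - 1) (dT - \<beta>)"
proof -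
  obtain s0 t0 where st: "s0 \<in> S" "t0 < n" "t0 \<notin> S"
    using S by blast
  have "finite S" using S finite_subset by blast
  then have "s > 0" "t > 0"
    using st by (auto simp: s_def t_def card_gt_0_iff)
  have "0 < s * t * \<gamma>\<^sup>2"
    using \<open>s > 0\<close> \<open>t > 0\<close> \<open>\<gamma> \<noteq> 0\<close> by simp
  note roots = roots_of_trace_det[OF sum prod]
  have "l1 \<noteq> l2" by (rule roots(1)) fact
  define q where "q = t * \<gamma>"
  define D where "D = q * (l2 - l1)"
  have "q \<noteq> 0"
    using \<open>t > 0\<close> \<open>\<gamma> \<noteq> 0\<close> by (simp add: q_def)
  then have "D \<noteq> 0" using \<open>l1 \<noteq> l2\<close> by (simp add: D_def)
  have eig: "(dS + (real (card S) - 1) * \<alpha>) * q + real (card ({..<n} - S)) * \<gamma> * (l - p) = l * q"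
    for l by (simp add: p_def q_def s_def t_def algebra_simps)
  have eig': "real (card S) * \<gamma> * q + (dT + (real (card ({..<n} - S)) - 1) * \<beta>) * (l - p) = l * (l - p)"
    if "l = l1 \<or> l = l2" for l
    using roots(2)[OF that] by (simp add: p_def w_def q_def s_def t_def power2_eq_square algebra_simps)
  have inv: "(l2 - p) / D * q + - q / D * (l1 - p) = 1" "(l2 - p) / D * q + - q / D * (l2 - p) = 0"
    "- (l1 - p) / D * q + q / D * (l1 - p) = 0" "- (l1 - p) / D * q + q / D * (l2 - p) = 1"
    using \<open>D \<noteq> 0\<close> by (simp_all add: field_simps) (simp_all add: D_def algebra_simps)
  interpret two_block_eigenbasis n S s0 t0 dS dT \<alpha> \<beta> \<gamma> l1 l2 q "l1 - p" q "l2 - p"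
    "(l2 - p) / D" "- q / D" "- (l1 - p) / D" "q / D"
    by unfold_locales (use st S eig eig' inv in auto)
  show ?thesis by (rule spec_mset_eq)
qed

section \<open>Joins of complete or edgeless graphs\<close>

lemma card_adjacent_pairs_spanning:
  assumes sym: "\<And>x y. x \<in> V \<Longrightarrow> y \<in> V \<Longrightarrow> adj x y \<Longrightarrow> adj y x"
    and irr: "\<And>x. x \<in> V \<Longrightarrow> \<not> adj x x"
    and e: "a \<in> V" "b \<in> V" "adj a b"
  shows "card {p \<in> Sigma V (\<lambda>u. {w\<in>V. adj u w}). {fst p, snd p} = {a, b}} = 2"
proof -
  have "{p \<in> Sigma V (\<lambda>u. {w\<in>V. adj u w}). {fst p, snd p} = {a, b}} = {(a, b), (b, a)}"
    using e sym[OF e] by (auto simp: doubleton_eq_iff insert_commute)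
  moreover have "a \<noteq> b" using e irr by auto
  ultimately show ?thesis by simp
qed

lemma double_num_edges_eq_sum_gdeg:
  assumes fin: "finite V"
    and sym: "\<And>u w. u \<in> V \<Longrightarrow> w \<in> V \<Longrightarrow> adj u w \<Longrightarrow> adj w u"
    and irr: "\<And>u. u \<in> V \<Longrightarrow> \<not> adj u u"
  shows "2 * num_edges V adj = (\<Sum>v\<in>V. gdeg V adj v)"
proof -
  let ?P = "Sigma V (\<lambda>u. {w\<in>V. adj u w})"
  let ?E = "{{u, w} | u w. u \<in> V \<and> w \<in> V \<and> adj u w}"
  have "?P \<subseteq> (\<Union>e\<in>?E. {p\<in>?P. {fst p, snd p} = e})"
  proof
    fix p assume p: "p \<in> ?P"
    obtain a b where ab: "p = (a, b)" by (cases p)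
    have "{a, b} \<in> ?E" using p ab by blast
    with p ab show "p \<in> (\<Union>e\<in>?E. {p\<in>?P. {fst p, snd p} = e})" by auto
  qed
  then have "?P = (\<Union>e\<in>?E. {p\<in>?P. {fst p, snd p} = e})" by blast
  then have "card ?P = card (\<Union>e\<in>?E. {p\<in>?P. {fst p, snd p} = e})" by simp
  also have "\<dots> = (\<Sum>e\<in>?E. card {p\<in>?P. {fst p, snd p} = e})"
  proof (rule card_UN_disjoint)
    show "finite ?E"
      by (rule finite_subset[of _ "Pow V"]) (use fin in auto)
    show "\<forall>e\<in>?E. finite {p\<in>?P. {fst p, snd p} = e}" using fin by simp
    show "\<forall>e1\<in>?E. \<forall>e2\<in>?E. e1 \<noteq> e2 \<longrightarrow>
        {p\<in>?P. {fst p, snd p} = e1} \<inter> {p\<in>?P. {fst p, snd p} = e2} = {}"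
      by blast
  qed
  also have "\<dots> = (\<Sum>e\<in>?E. 2)"
  proof (rule sum.cong)
    fix e assume "e \<in> ?E"
    then obtain u w where "e = {u, w}" "u \<in> V" "w \<in> V" "adj u w" by blast
    then show "card {p\<in>?P. {fst p, snd p} = e} = 2"
      using card_adjacent_pairs_spanning[of V adj, OF sym irr] by simp
  qed simp
  finally show ?thesis
    using fin by (simp add: num_edges_def gdeg_def)
qed

lemma bij_betw_venum:
  assumes "finite V"
  shows "bij_betw (venum V) {..<card V} V"
proof -
  have "\<exists>h. bij_betw h {..<card V} V"
    using ex_bij_betw_nat_finite[OF assms] by (simp add: atLeast0LessThan)
  then show ?thesis unfolding venum_def by (rule someI_ex)
qed

locale two_part_join =
  fixes V VS :: "'v set" and adj :: "'v \<Rightarrow> 'v \<Rightarrow> bool" and cS cT :: bool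
  assumes finite_V: "finite V" and VS_subset: "VS \<subseteq> V"
    and adj_iff: "\<And>X Y. X \<in> V \<Longrightarrow> Y \<in> V \<Longrightarrow> adj X Y \<longleftrightarrow> X \<noteq> Y \<and>
       (if X \<in> VS \<and> Y \<in> VS then cS else if X \<notin> VS \<and> Y \<notin> VS then cT else True)"
begin

abbreviation "N \<equiv> card V"
abbreviation "VT \<equiv> V - VS"

definition "VS_index = {i. i < N \<and> venum V i \<in> VS}"
definition "deg_S = of_bool cS * (card VS - 1) + card VT"
definition "deg_T = card VS + of_bool cT * (card VT - 1)"

lemma finite_VS: "finite VS"
  using VS_subset finite_V finite_subset by blast

lemma card_V: "N = card VS + card VT"
  using VS_subset finite_V finite_VS by (metis card_Diff_subset card_mono le_add_diff_inverse)

lemma venum_inj: "i < N \<Longrightarrow> j < N \<Longrightarrow> venum V i = venum V j \<longleftrightarrow> i = j"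
  using bij_betw_venum[OF finite_V] unfolding bij_betw_def inj_on_def by auto

lemma venum_in_V: "i < N \<Longrightarrow> venum V i \<in> V"
  using bij_betw_venum[OF finite_V] unfolding bij_betw_def by auto

lemma card_VS_index: "card VS_index = card VS"
proof -
  have "bij_betw (venum V) VS_index VS"
    using bij_betw_subset[OF bij_betw_venum[OF finite_V], of VS_index] VS_subset
      bij_betw_venum[OF finite_V]
    unfolding VS_index_def bij_betw_def by (auto simp: image_iff)
  then show ?thesis by (rule bij_betw_same_card)
qed

lemma card_VS_index_compl: "card ({..<N} - VS_index) = card VT"
proof -
  have "VS_index \<subseteq> {..<N}" by (auto simp: VS_index_def)
  then have "card ({..<N} - VS_index) = N - card VS"
    by (simp add: card_Diff_subset finite_subset card_VS_index)
  then show ?thesis using card_V by simp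
qed

lemma gdeg_VS: "X \<in> VS \<Longrightarrow> gdeg V adj X = deg_S"
proof -
  assume X: "X \<in> VS"
  then have "X \<in> V" using VS_subset by auto
  then have "adj X w \<longleftrightarrow> X \<noteq> w \<and> (if w \<in> VS then cS else True)" if "w \<in> V" for w
    using adj_iff[OF _ that] X by simp
  then have "{w\<in>V. adj X w} = (if cS then VS - {X} else {}) \<union> VT"
    using X VS_subset by auto
  moreover have "card ((if cS then VS - {X} else {}) \<union> VT) = card (if cS then VS - {X} else {}) + card VT"
    by (rule card_Un_disjoint) (use finite_V finite_VS in auto)
  ultimately show ?thesis
    using X finite_VS by (simp add: gdeg_def deg_S_def)
qed

lemma gdeg_VT: "X \<in> VT \<Longrightarrow> gdeg V adj X = deg_T"
proof -
  assume X: "X \<in> VT"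
  then have "adj X w \<longleftrightarrow> X \<noteq> w \<and> (if w \<in> VS then True else cT)" if "w \<in> V" for w
    using adj_iff[OF _ that] X by simp
  then have "{w\<in>V. adj X w} = VS \<union> (if cT then VT - {X} else {})"
    using X VS_subset by (auto split: if_splits)
  moreover have "card (VS \<union> (if cT then VT - {X} else {})) = card VS + card (if cT then VT - {X} else {})"
    by (rule card_Un_disjoint) (use finite_V finite_VS in auto)
  ultimately show ?thesis
    using X finite_V by (simp add: gdeg_def deg_T_def)
qed

lemma gdeg_venum:
  "i < N \<Longrightarrow> gdeg V adj (venum V i) = (if i \<in> VS_index then deg_S else deg_T)"
  using gdeg_VS gdeg_VT venum_in_V by (auto simp: VS_index_def)

lemma adj_venum: "i < N \<Longrightarrow> j < N \<Longrightarrow> adj (venum V i) (venum V j) \<longleftrightarrow> i \<noteq> j \<and>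
     (if i \<in> VS_index \<and> j \<in> VS_index then cS
      else if i \<notin> VS_index \<and> j \<notin> VS_index then cT else True)"
  using adj_iff[OF venum_in_V venum_in_V] venum_inj by (auto simp: VS_index_def)

lemma adj_mat_eq:
  "adj_mat V adj = two_block_mat N VS_index 0 0 (of_bool cS) (of_bool cT) 1"
  by (rule eq_matI)
    (auto simp: adj_mat_def two_block_mat_def adj_venum)

lemma lap_mat_eq:
  "lap_mat V adj = two_block_mat N VS_index deg_S deg_T (- of_bool cS) (- of_bool cT) (- 1)"
  by (rule eq_matI)
    (auto simp: lap_mat_def deg_mat_def adj_mat_def two_block_mat_def adj_venum gdeg_venum)

lemma slap_mat_eq:
  "slap_mat V adj = two_block_mat N VS_index deg_S deg_T (of_bool cS) (of_bool cT) 1"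
  by (rule eq_matI)
    (auto simp: slap_mat_def deg_mat_def adj_mat_def two_block_mat_def adj_venum gdeg_venum)

lemma real_deg_S: "VS \<noteq> {} \<Longrightarrow> real deg_S = of_bool cS * (real (card VS) - 1) + real (card VT)"
  using finite_VS by (simp add: deg_S_def of_nat_diff Suc_le_eq card_gt_0_iff)

lemma real_deg_T: "VT \<noteq> {} \<Longrightarrow> real deg_T = real (card VS) + of_bool cT * (real (card VT) - 1)"
  using finite_V by (simp add: deg_T_def of_nat_diff Suc_le_eq card_gt_0_iff)

lemma double_num_edges: "2 * num_edges V adj = card VS * deg_S + card VT * deg_T"
proof -
  have "2 * num_edges V adj = (\<Sum>v\<in>V. gdeg V adj v)"
    by (rule double_num_edges_eq_sum_gdeg) (use finite_V adj_iff in auto)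
  also have "\<dots> = (\<Sum>v\<in>VS. gdeg V adj v) + (\<Sum>v\<in>VT. gdeg V adj v)"
    using sum.subset_diff[OF VS_subset finite_V] by (simp add: add.commute)
  finally show ?thesis by (simp add: gdeg_VS gdeg_VT)
qed

lemma avg_deg_eq:
  "avg_deg V adj = (real (card VS) * real deg_S + real (card VT) * real deg_T) / real N"
proof -
  have "2 * real (num_edges V adj) = real (2 * num_edges V adj)" by simp
  also have "\<dots> = real (card VS) * real deg_S + real (card VT) * real deg_T"
    unfolding double_num_edges by simp
  finally show ?thesis by (simp add: avg_deg_def)
qed

lemma spec_mset_two_block_mat_VS_index:
  fixes dS dT \<alpha> \<beta> \<gamma> l1 l2 :: real
  assumes "VS \<noteq> {}" "VT \<noteq> {}" "\<gamma> \<noteq> 0"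
    and "l1 + l2 = dS + (real (card VS) - 1) * \<alpha> + (dT + (real (card VT) - 1) * \<beta>)"
    and "l1 * l2 = (dS + (real (card VS) - 1) * \<alpha>) * (dT + (real (card VT) - 1) * \<beta>)
           - real (card VS) * real (card VT) * \<gamma>\<^sup>2"
  shows "spec_mset (two_block_mat N VS_index dS dT \<alpha> \<beta> \<gamma>) =
     {#l1, l2#} + replicate_mset (card VS - 1) (dS - \<alpha>) + replicate_mset (card VT - 1) (dT - \<beta>)"
proof -
  have "card VS_index \<noteq> 0" "card ({..<N} - VS_index) \<noteq> 0"
    using assms(1,2) finite_VS finite_V by (simp_all add: card_VS_index card_VS_index_compl)
  then have "VS_index \<noteq> {}" "{..<N} - VS_index \<noteq> {}"
    by auto
  moreover have "VS_index \<subseteq> {..<N}" by (auto simp: VS_index_def)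
  ultimately show ?thesis
    using spec_mset_two_block_mat[of VS_index N \<gamma> l1 l2 dS \<alpha> dT \<beta>] assms
    by (simp add: card_VS_index card_VS_index_compl)
qed

lemma gspec_eq:
  fixes l1 l2 :: real
  assumes "VS \<noteq> {}" "VT \<noteq> {}"
    and "l1 + l2 = of_bool cS * (real (card VS) - 1) + of_bool cT * (real (card VT) - 1)"
    and "l1 * l2 = of_bool cS * (real (card VS) - 1) * (of_bool cT * (real (card VT) - 1))
           - real (card VS) * real (card VT)"
  shows "gspec V adj = {#l1, l2#}
     + replicate_mset (card VS - 1) (- of_bool cS) + replicate_mset (card VT - 1) (- of_bool cT)"
  using spec_mset_two_block_mat_VS_index[of 1 l1 l2 0 "of_bool cS" 0 "of_bool cT"] assms
  by (simp add: gspec_def adj_mat_eq mult.commute)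

lemma lspec_eq:
  assumes "VS \<noteq> {}" "VT \<noteq> {}"
  shows "lspec V adj = {#real N, 0#}
     + replicate_mset (card VS - 1) (real deg_S + of_bool cS)
     + replicate_mset (card VT - 1) (real deg_T + of_bool cT)"
proof -
  have "lspec V adj = {#real N, 0#}
     + replicate_mset (card VS - 1) (real deg_S - - of_bool cS)
     + replicate_mset (card VT - 1) (real deg_T - - of_bool cT)"
    unfolding lspec_def lap_mat_eq
    by (rule spec_mset_two_block_mat_VS_index)
      (use assms real_deg_S real_deg_T card_V in \<open>simp_all add: algebra_simps\<close>)
  then show ?thesis by simp
qed

lemma qspec_eq:
  fixes l1 l2 :: real
  defines "p \<equiv> real deg_S + of_bool cS * (real (card VS) - 1)"
    and "w \<equiv> real deg_T + of_bool cT * (real (card VT) - 1)"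
  assumes "VS \<noteq> {}" "VT \<noteq> {}"
    and "l1 + l2 = p + w" and "l1 * l2 = p * w - real (card VS) * real (card VT)"
  shows "qspec V adj = {#l1, l2#}
     + replicate_mset (card VS - 1) (real deg_S - of_bool cS)
     + replicate_mset (card VT - 1) (real deg_T - of_bool cT)"
  using spec_mset_two_block_mat_VS_index[of 1 l1 l2 deg_S "of_bool cS" deg_T "of_bool cT"] assms
  by (simp add: qspec_def slap_mat_eq mult.commute)

end

section \<open>The semidihedral group\<close>

lemma even_dvd_pred_mult_iff:
  fixes n x :: int
  assumes "even n"
  shows "2 * n dvd (n - 1) * x \<longleftrightarrow> 2 * n dvd x"
proof -
  have "coprime n (n - 1)"
    by (metis coprime_commute coprime_diff_one_left)
  moreover have "coprime 2 (n - 1)"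
    using assms by simp
  ultimately have "coprime (2 * n) (n - 1)"
    by simp
  then show ?thesis by (simp add: coprime_dvd_mult_right_iff)
qed

lemma odd_dvd_pred_mult_iff:
  fixes n x :: int
  assumes "odd n"
  shows "2 * n dvd (n - 1) * x \<longleftrightarrow> n dvd x"
proof -
  obtain k where k: "n = 2 * k + 1" using assms oddE by blast
  have "coprime n k"
    unfolding k by (metis coprime_add_one_left coprime_commute coprime_mult_right_iff)
  have "2 * n dvd (n - 1) * x \<longleftrightarrow> 2 * n dvd 2 * (k * x)"
    by (simp add: k mult.assoc)
  also have "\<dots> \<longleftrightarrow> n dvd k * x"
    by simp
  also have "\<dots> \<longleftrightarrow> n dvd x"
    using \<open>coprime n k\<close> by (simp add: coprime_dvd_mult_right_iff)
  finally show ?thesis .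
qed

locale semidihedral =
  fixes m :: nat
  assumes m_ge_2: "2 \<le> m"
begin

abbreviation "G \<equiv> SD m"
abbreviation "ordx \<equiv> 4 * int m"
abbreviation "r \<equiv> 2 * int m - 1"
definition "zstep = (if even m then 2 * int m else int m)"
definition "zcard = (if even m then 2 else (4::int))"

text \<open>\<open>x\<^sup>j\<close> is central iff \<open>zstep\<close> divides \<open>j\<close>. The centre has \<open>zcard\<close> elements, and the
  conjugacy class of the reflection \<open>x\<^sup>iy\<close> is determined by \<open>i mod zcard\<close>.\<close>

lemma ordx_pos: "ordx > 0"
  using m_ge_2 by simp

lemma carrier_SD: "carrier G = {0..<ordx} \<times> UNIV"
  by (simp add: SD_def)

lemma mult_SD: "(i, a) \<otimes>\<^bsub>G\<^esub> (j, b) = ((i + (if a then r * j else j)) mod ordx, a \<noteq> b)"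
  by (simp add: SD_def)

lemma one_SD: "\<one>\<^bsub>G\<^esub> = (0, False)"
  by (simp add: SD_def)

lemma mod_ordx_eq_iff: "(a::int) mod ordx = b mod ordx \<longleftrightarrow> ordx dvd (a - b)"
  by (simp add: mod_eq_dvd_iff)

lemma r_squared: "r * r = 1 + ordx * (int m - 1)"
  by (simp add: algebra_simps)

lemma inv_rotation:
  assumes "0 \<le> i" "i < ordx"
  shows "inv\<^bsub>G\<^esub> (i, False) = ((- i) mod ordx, False)"
  unfolding m_inv_def
proof (rule the_equality)
  show "((- i) mod ordx, False) \<in> carrier G \<and> (i, False) \<otimes>\<^bsub>G\<^esub> ((- i) mod ordx, False) = \<one>\<^bsub>G\<^esub> \<and>
    ((- i) mod ordx, False) \<otimes>\<^bsub>G\<^esub> (i, False) = \<one>\<^bsub>G\<^esub>"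
    using ordx_pos by (simp add: carrier_SD mult_SD one_SD mod_add_right_eq mod_add_left_eq)
next
  fix y assume y: "y \<in> carrier G \<and> (i, False) \<otimes>\<^bsub>G\<^esub> y = \<one>\<^bsub>G\<^esub> \<and> y \<otimes>\<^bsub>G\<^esub> (i, False) = \<one>\<^bsub>G\<^esub>"
  obtain j b where jb: "y = (j, b)" by (cases y)
  have j: "0 \<le> j" "j < ordx" using y jb by (auto simp: carrier_SD)
  have "(i + j) mod ordx = 0" "b = False" using y jb by (auto simp: mult_SD one_SD)
  then have "j mod ordx = (- i) mod ordx" by (simp add: mod_ordx_eq_iff mod_eq_0_iff_dvd add.commute)
  then have "j = (- i) mod ordx" using j by simp
  then show "y = ((- i) mod ordx, False)" using jb \<open>b = False\<close> by simp
qed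

lemma inv_reflection:
  assumes "0 \<le> i" "i < ordx"
  shows "inv\<^bsub>G\<^esub> (i, True) = ((- r * i) mod ordx, True)"
  unfolding m_inv_def
proof (rule the_equality)
  have e1: "(i + r * ((- r * i) mod ordx)) mod ordx = 0"
  proof -
    have "(i + r * ((- r * i) mod ordx)) mod ordx = (i + (r * ((- r * i) mod ordx)) mod ordx) mod ordx"
      by (rule mod_add_right_eq[symmetric])
    also have "(r * ((- r * i) mod ordx)) mod ordx = (r * (- r * i)) mod ordx"
      by (rule mod_mult_right_eq)
    also have "(i + (r * (- r * i)) mod ordx) mod ordx = (i + r * (- r * i)) mod ordx"
      by (rule mod_add_right_eq)
    also have "i + r * (- r * i) = ordx * (- (int m - 1) * i)" using r_squared by (simp add: algebra_simps)
    finally show ?thesis by simp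
  qed
  have e2: "((- r * i) mod ordx + r * i) mod ordx = 0"
  proof -
    have "((- r * i) mod ordx + r * i) mod ordx = (- r * i + r * i) mod ordx" by (rule mod_add_left_eq)
    then show ?thesis by (simp add: algebra_simps)
  qed
  show "((- r * i) mod ordx, True) \<in> carrier G \<and> (i, True) \<otimes>\<^bsub>G\<^esub> ((- r * i) mod ordx, True) = \<one>\<^bsub>G\<^esub> \<and>
    ((- r * i) mod ordx, True) \<otimes>\<^bsub>G\<^esub> (i, True) = \<one>\<^bsub>G\<^esub>"
    using ordx_pos e1 e2 by (simp add: carrier_SD mult_SD one_SD)
next
  fix y assume y: "y \<in> carrier G \<and> (i, True) \<otimes>\<^bsub>G\<^esub> y = \<one>\<^bsub>G\<^esub> \<and> y \<otimes>\<^bsub>G\<^esub> (i, True) = \<one>\<^bsub>G\<^esub>"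
  obtain j b where jb: "y = (j, b)" by (cases y)
  have j: "0 \<le> j" "j < ordx" using y jb by (auto simp: carrier_SD)
  have b: "b = True" using y jb by (auto simp: mult_SD one_SD)
  have "(j + r * i) mod ordx = 0" using y jb b by (auto simp: mult_SD one_SD)
  then have d: "ordx dvd (j + r * i)" by (simp add: mod_eq_0_iff_dvd)
  have "j mod ordx = (- r * i) mod ordx" unfolding mod_ordx_eq_iff using d by (simp add: algebra_simps)
  then have "j = (- r * i) mod ordx" using j by simp
  then show "y = ((- r * i) mod ordx, True)" using jb b by simp
qed

lemma ordx_dvd_mult_iff: "ordx dvd ((2 * int m - 2) * x) \<longleftrightarrow> zstep dvd x"
proof -
  have "ordx dvd ((2 * int m - 2) * x) \<longleftrightarrow> 2 * int m dvd (int m - 1) * x"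
    using dvd_mult_cancel_left[of 2 "2 * int m" "(int m - 1) * x"] by (simp add: algebra_simps)
  then show ?thesis
    by (simp add: zstep_def even_dvd_pred_mult_iff odd_dvd_pred_mult_iff)
qed

lemma mod_add_mult_mod: "(a mod ordx + c * (b mod ordx)) mod ordx = (a + c * b) mod ordx"
proof -
  have "(a mod ordx + c * (b mod ordx)) mod ordx = (a + c * (b mod ordx)) mod ordx" by (rule mod_add_left_eq)
  also have "\<dots> = (a + (c * (b mod ordx)) mod ordx) mod ordx" by (rule mod_add_right_eq[symmetric])
  also have "(c * (b mod ordx)) mod ordx = (c * b) mod ordx" by (rule mod_mult_right_eq)
  also have "(a + (c * b) mod ordx) mod ordx = (a + c * b) mod ordx" by (rule mod_add_right_eq)
  finally show ?thesis .
qed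

lemma rot_conj_rot:
  assumes "0 \<le> k" "k < ordx" "0 \<le> j" "j < ordx"
  shows "(k, False) \<otimes>\<^bsub>G\<^esub> (j, False) \<otimes>\<^bsub>G\<^esub> inv\<^bsub>G\<^esub> (k, False) = (j, False)"
proof -
  have "(k, False) \<otimes>\<^bsub>G\<^esub> (j, False) \<otimes>\<^bsub>G\<^esub> inv\<^bsub>G\<^esub> (k, False) = (((k + j) mod ordx + (- k) mod ordx) mod ordx, False)"
    using assms by (simp add: mult_SD inv_rotation)
  also have "((k + j) mod ordx + (- k) mod ordx) mod ordx = (k + j + - k) mod ordx" by (rule mod_add_eq)
  finally show ?thesis using assms by simp
qed

lemma refl_conj_rot:
  assumes "0 \<le> k" "k < ordx" "0 \<le> j" "j < ordx"
  shows "(k, True) \<otimes>\<^bsub>G\<^esub> (j, False) \<otimes>\<^bsub>G\<^esub> inv\<^bsub>G\<^esub> (k, True) = ((r * j) mod ordx, False)"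
proof -
  have "(k, True) \<otimes>\<^bsub>G\<^esub> (j, False) \<otimes>\<^bsub>G\<^esub> inv\<^bsub>G\<^esub> (k, True) = (((k + r * j) mod ordx + r * ((- r * k) mod ordx)) mod ordx, False)"
    using assms by (simp add: mult_SD inv_reflection)
  also have "((k + r * j) mod ordx + r * ((- r * k) mod ordx)) mod ordx = (k + r * j + r * (- r * k)) mod ordx" by (rule mod_add_mult_mod)
  also have "\<dots> = (r * j) mod ordx" unfolding mod_ordx_eq_iff
  proof -
    have "k + r * j + r * (- r * k) - r * j = ordx * (- (int m - 1) * k)" using r_squared by (simp add: algebra_simps)
    then show "ordx dvd k + r * j + r * (- r * k) - r * j" by simp
  qed
  finally show ?thesis .
qed

lemma rot_conj_refl:
  assumes "0 \<le> k" "k < ordx" "0 \<le> i" "i < ordx"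
  shows "(k, False) \<otimes>\<^bsub>G\<^esub> (i, True) \<otimes>\<^bsub>G\<^esub> inv\<^bsub>G\<^esub> (k, False) = ((i - (2 * int m - 2) * k) mod ordx, True)"
proof -
  have "(k, False) \<otimes>\<^bsub>G\<^esub> (i, True) \<otimes>\<^bsub>G\<^esub> inv\<^bsub>G\<^esub> (k, False) = (((k + i) mod ordx + r * ((- k) mod ordx)) mod ordx, True)"
    using assms by (simp add: mult_SD inv_rotation)
  also have "((k + i) mod ordx + r * ((- k) mod ordx)) mod ordx = (k + i + r * (- k)) mod ordx" by (rule mod_add_mult_mod)
  also have "k + i + r * (- k) = i - (2 * int m - 2) * k" by (simp add: algebra_simps)
  finally show ?thesis .
qed

lemma refl_conj_refl:
  assumes "0 \<le> k" "k < ordx" "0 \<le> i" "i < ordx"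
  shows "(k, True) \<otimes>\<^bsub>G\<^esub> (i, True) \<otimes>\<^bsub>G\<^esub> inv\<^bsub>G\<^esub> (k, True) = ((r * i - (2 * int m - 2) * k) mod ordx, True)"
proof -
  have "(k, True) \<otimes>\<^bsub>G\<^esub> (i, True) \<otimes>\<^bsub>G\<^esub> inv\<^bsub>G\<^esub> (k, True) = (((k + r * i) mod ordx + (- r * k) mod ordx) mod ordx, True)"
    using assms by (simp add: mult_SD inv_reflection)
  also have "((k + r * i) mod ordx + (- r * k) mod ordx) mod ordx = (k + r * i + - r * k) mod ordx" by (rule mod_add_eq)
  also have "k + r * i + - r * k = r * i - (2 * int m - 2) * k" by (simp add: algebra_simps)
  finally show ?thesis .
qed

lemma rot_refl_commute_iff:
  assumes "0 \<le> k" "k < ordx" "0 \<le> j" "j < ordx"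
  shows "(j, False) \<otimes>\<^bsub>G\<^esub> (k, True) = (k, True) \<otimes>\<^bsub>G\<^esub> (j, False) \<longleftrightarrow> zstep dvd j"
proof -
  have "(j, False) \<otimes>\<^bsub>G\<^esub> (k, True) = (k, True) \<otimes>\<^bsub>G\<^esub> (j, False) \<longleftrightarrow> (j + k) mod ordx = (k + r * j) mod ordx"
    by (simp add: mult_SD)
  also have "\<dots> \<longleftrightarrow> ordx dvd (j + k - (k + r * j))" by (rule mod_ordx_eq_iff)
  also have "j + k - (k + r * j) = - ((2 * int m - 2) * j)" by (simp add: algebra_simps)
  also have "ordx dvd - ((2 * int m - 2) * j) \<longleftrightarrow> zstep dvd j" using ordx_dvd_mult_iff by simp
  finally show ?thesis .
qed

lemma refl_refl_commute_iff:
  shows "(i, True) \<otimes>\<^bsub>G\<^esub> (k, True) = (k, True) \<otimes>\<^bsub>G\<^esub> (i, True) \<longleftrightarrow> zstep dvd (k - i)"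
proof -
  have "(i, True) \<otimes>\<^bsub>G\<^esub> (k, True) = (k, True) \<otimes>\<^bsub>G\<^esub> (i, True) \<longleftrightarrow> (i + r * k) mod ordx = (k + r * i) mod ordx"
    by (simp add: mult_SD)
  also have "\<dots> \<longleftrightarrow> ordx dvd (i + r * k - (k + r * i))" by (rule mod_ordx_eq_iff)
  also have "i + r * k - (k + r * i) = (2 * int m - 2) * (k - i)" by (simp add: algebra_simps)
  also have "ordx dvd ((2 * int m - 2) * (k - i)) \<longleftrightarrow> zstep dvd (k - i)" by (rule ordx_dvd_mult_iff)
  finally show ?thesis .
qed

lemma rot_rot_commute: "(i, False) \<otimes>\<^bsub>G\<^esub> (k, False) = (k, False) \<otimes>\<^bsub>G\<^esub> (i, False)"
  by (simp add: mult_SD add.commute)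

lemma zstep_ge_2: "zstep \<ge> 2"
  using m_ge_2 unfolding zstep_def by auto

lemma not_zstep_dvd_1: "\<not> zstep dvd 1"
proof
  assume "zstep dvd 1"
  then have "zstep \<le> 1" by (rule zdvd_imp_le) simp
  with zstep_ge_2 show False by simp
qed

lemma grp_center_SD: "grp_center G = {(j, False) | j. 0 \<le> j \<and> j < ordx \<and> zstep dvd j}"
proof (intro equalityI subsetI)
  fix z assume z: "z \<in> grp_center G"
  then obtain a b where ab: "z = (a, b)" "0 \<le> a" "a < ordx"
    by (auto simp: grp_center_def carrier_SD)
  have "(1, False) \<in> carrier G" "(0, True) \<in> carrier G"
    using m_ge_2 by (auto simp: carrier_SD)
  then have "z \<otimes>\<^bsub>G\<^esub> (1, False) = (1, False) \<otimes>\<^bsub>G\<^esub> z" "z \<otimes>\<^bsub>G\<^esub> (0, True) = (0, True) \<otimes>\<^bsub>G\<^esub> z"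
    using z by (auto simp: grp_center_def)
  then show "z \<in> {(j, False) | j. 0 \<le> j \<and> j < ordx \<and> zstep dvd j}"
    using ab rot_refl_commute_iff[of a 1] rot_refl_commute_iff[of 0 a] not_zstep_dvd_1 m_ge_2
    by (cases b) auto
next
  fix z assume "z \<in> {(j, False) | j. 0 \<le> j \<and> j < ordx \<and> zstep dvd j}"
  then obtain a where a: "z = (a, False)" "0 \<le> a" "a < ordx" "zstep dvd a"
    by auto
  have "z \<otimes>\<^bsub>G\<^esub> (k, c) = (k, c) \<otimes>\<^bsub>G\<^esub> z" if "(k, c) \<in> carrier G" for k c
    using that a rot_refl_commute_iff[of k a] rot_rot_commute by (cases c) (auto simp: carrier_SD)
  then show "z \<in> grp_center G"
    using a by (auto simp: grp_center_def carrier_SD)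
qed

definition refl_class :: "int \<Rightarrow> (int \<times> bool) set" where
  "refl_class i = {(k, True) | k. 0 \<le> k \<and> k < ordx \<and> k mod zcard = i mod zcard}"

lemma zcard_dvd_ordx: "zcard dvd ordx"
  unfolding zcard_def by (auto intro: dvdI[where k = "2 * int m"] dvdI[where k = "int m"])

lemma zcard_dvd_2m_minus_2: "zcard dvd (2 * int m - 2)"
proof (cases "even m")
  case True
  then show ?thesis unfolding zcard_def by (auto intro: dvdI[where k = "int m - 1"] simp: algebra_simps)
next
  case False
  then obtain h where h: "m = 2 * h + 1" using oddE by blast
  show ?thesis using False h unfolding zcard_def by (auto intro: dvdI[where k = "int h"] simp: algebra_simps)
qed

lemma zcard_pos: "zcard > 0"
  unfolding zcard_def by simp

lemma mod_diff_mult_mod: "(i - c * (kk mod ordx)) mod ordx = (i - c * kk) mod ordx"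
proof -
  have "(i mod ordx + (- c) * (kk mod ordx)) mod ordx = (i + (- c) * kk) mod ordx" by (rule mod_add_mult_mod)
  moreover have "(i - c * (kk mod ordx)) mod ordx = (i mod ordx - c * (kk mod ordx)) mod ordx" by (rule mod_diff_left_eq[symmetric])
  moreover have "i mod ordx - c * (kk mod ordx) = i mod ordx + (- c) * (kk mod ordx)" by simp
  moreover have "i - c * kk = i + (- c) * kk" by simp
  ultimately show ?thesis by metis
qed

lemma ex_rot_conjugator:
  assumes "k' mod zcard = i mod zcard"
  shows "\<exists>kk. ordx dvd (i - (2 * int m - 2) * kk - k')"
proof (cases "even m")
  case True
  then obtain h where h: "m = 2 * h" by (auto elim: evenE)
  have "zcard dvd (i - k')" using assms[symmetric] by (simp add: mod_eq_dvd_iff)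
  then have "2 dvd (i - k')" using True unfolding zcard_def by simp
  then obtain d where d: "i - k' = 2 * d" unfolding dvd_def by blast
  have "i - (2 * int m - 2) * ((int m - 1) * d) - k' = ordx * (- d * (int h - 1))"
  proof -
    have "i - (2 * int m - 2) * ((int m - 1) * d) - k' = (i - k') - (2 * int m - 2) * ((int m - 1) * d)" by simp
    also have "\<dots> = 2 * d - (2 * int m - 2) * ((int m - 1) * d)" using d by simp
    also have "\<dots> = ordx * (- d * (int h - 1))" using h by (simp add: algebra_simps)
    finally show ?thesis .
  qed
  then show ?thesis by (intro exI[of _ "(int m - 1) * d"]) simp
next
  case False
  have "zcard dvd (i - k')" using assms[symmetric] by (simp add: mod_eq_dvd_iff)
  then have "4 dvd (i - k')" using False unfolding zcard_def by simp
  then obtain d where d: "i - k' = 4 * d" unfolding dvd_def by blast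
  have "i - (2 * int m - 2) * (- 2 * d) - k' = ordx * d"
  proof -
    have "i - (2 * int m - 2) * (- 2 * d) - k' = (i - k') + (2 * int m - 2) * (2 * d)" by (simp add: algebra_simps)
    also have "\<dots> = ordx * d" using d by (simp add: algebra_simps)
    finally show ?thesis .
  qed
  then show ?thesis by (intro exI[of _ "- 2 * d"]) simp
qed

definition "twist j = (r * j) mod ordx"
definition "rot_class j = {(j, False), (twist j, False)}"

lemma conj_class_rot:
  assumes "0 \<le> j" "j < ordx"
  shows "conj_class G (j, False) = rot_class j"
proof (intro equalityI subsetI)
  fix y assume "y \<in> conj_class G (j, False)"
  then obtain k c where "(k, c) \<in> carrier G" "y = (k, c) \<otimes>\<^bsub>G\<^esub> (j, False) \<otimes>\<^bsub>G\<^esub> inv\<^bsub>G\<^esub> (k, c)"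
    unfolding conj_class_def by auto
  then show "y \<in> rot_class j"
    using rot_conj_rot[of k j] refl_conj_rot[of k j] assms
    by (cases c) (auto simp: carrier_SD rot_class_def twist_def)
next
  fix y assume y: "y \<in> rot_class j"
  have "(0, False) \<in> carrier G" "(0, True) \<in> carrier G"
    using ordx_pos by (auto simp: carrier_SD)
  moreover have "(j, False) = (0, False) \<otimes>\<^bsub>G\<^esub> (j, False) \<otimes>\<^bsub>G\<^esub> inv\<^bsub>G\<^esub> (0, False)"
    using rot_conj_rot[of 0 j] assms ordx_pos by simp
  moreover have "(twist j, False) = (0, True) \<otimes>\<^bsub>G\<^esub> (j, False) \<otimes>\<^bsub>G\<^esub> inv\<^bsub>G\<^esub> (0, True)"
    using refl_conj_rot[of 0 j] assms ordx_pos by (simp add: twist_def)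
  ultimately show "y \<in> conj_class G (j, False)"
    using y unfolding conj_class_def rot_class_def by blast
qed

lemma conj_refl_in_refl_class:
  assumes "g \<in> carrier G" "0 \<le> i" "i < ordx"
  shows "g \<otimes>\<^bsub>G\<^esub> (i, True) \<otimes>\<^bsub>G\<^esub> inv\<^bsub>G\<^esub> g \<in> refl_class i"
proof -
  obtain k c where g: "g = (k, c)" "0 \<le> k" "k < ordx"
    using assms(1) by (auto simp: carrier_SD)
  have "(x - (2 * int m - 2) * k) mod ordx mod zcard = i mod zcard"
    if "zcard dvd x - i" for x
  proof -
    have "(x - (2 * int m - 2) * k) mod ordx mod zcard = (x - (2 * int m - 2) * k) mod zcard"
      using zcard_dvd_ordx by (rule mod_mod_cancel)
    also have "\<dots> = i mod zcard"
    proof -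
      have "zcard dvd (x - i) - (2 * int m - 2) * k"
        by (rule dvd_diff[OF that dvd_mult2[OF zcard_dvd_2m_minus_2]])
      then show ?thesis
        unfolding mod_eq_dvd_iff by (simp add: algebra_simps)
    qed
    finally show ?thesis .
  qed
  moreover have "zcard dvd r * i - i"
    using dvd_mult2[OF zcard_dvd_2m_minus_2, of i] by (simp add: algebra_simps)
  ultimately show ?thesis
    using g assms rot_conj_refl[of k i] refl_conj_refl[of k i] ordx_pos
    by (cases c) (auto simp: refl_class_def)
qed

lemma refl_class_subset_conj_class:
  assumes "0 \<le> i" "i < ordx"
  shows "refl_class i \<subseteq> conj_class G (i, True)"
proof
  fix y assume "y \<in> refl_class i"
  then obtain k' where y: "y = (k', True)" "0 \<le> k'" "k' < ordx" "k' mod zcard = i mod zcard"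
    unfolding refl_class_def by blast
  obtain kk where kk: "ordx dvd (i - (2 * int m - 2) * kk - k')"
    using ex_rot_conjugator[OF y(4)] by blast
  have k: "0 \<le> kk mod ordx" "kk mod ordx < ordx"
    using ordx_pos by auto
  have "(i - (2 * int m - 2) * (kk mod ordx)) mod ordx = (i - (2 * int m - 2) * kk) mod ordx"
    by (rule mod_diff_mult_mod)
  also have "\<dots> = k'"
    using kk y by (simp add: mod_ordx_eq_iff[symmetric])
  finally have "(kk mod ordx, False) \<otimes>\<^bsub>G\<^esub> (i, True) \<otimes>\<^bsub>G\<^esub> inv\<^bsub>G\<^esub> (kk mod ordx, False) = y"
    using rot_conj_refl[OF k assms] y by simp
  moreover have "(kk mod ordx, False) \<in> carrier G"
    using k by (simp add: carrier_SD)
  ultimately show "y \<in> conj_class G (i, True)"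
    unfolding conj_class_def by blast
qed

lemma conj_class_refl:
  assumes "0 \<le> i" "i < ordx"
  shows "conj_class G (i, True) = refl_class i"
  using conj_refl_in_refl_class[OF _ assms] refl_class_subset_conj_class[OF assms]
  by (auto simp: conj_class_def)

definition "noncentral_rots = {j. 0 \<le> j \<and> j < ordx \<and> \<not> zstep dvd j}"
definition "refl_classes = refl_class ` {0..<zcard}"
definition "rot_classes = rot_class ` noncentral_rots"

lemma zstep_dvd_ordx: "zstep dvd ordx"
  unfolding zstep_def by (auto intro: dvdI[where k = 2] dvdI[where k = 4])

lemma ordx_eq: "ordx = zstep * zcard"
  unfolding zstep_def zcard_def by auto

lemma twist_range: "0 \<le> twist j" "twist j < ordx"
  using ordx_pos by (auto simp: twist_def)

lemma twist_twist:
  assumes "0 \<le> j" "j < ordx"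
  shows "twist (twist j) = j"
proof -
  have "twist (twist j) = (r * ((r * j) mod ordx)) mod ordx" by (simp add: twist_def)
  also have "\<dots> = (r * (r * j)) mod ordx" by (rule mod_mult_right_eq)
  also have "\<dots> = j mod ordx" unfolding mod_ordx_eq_iff
  proof -
    have "r * (r * j) - j = ordx * ((int m - 1) * j)" using r_squared by (simp add: algebra_simps)
    then show "ordx dvd r * (r * j) - j" by simp
  qed
  finally show ?thesis using assms by simp
qed

lemma twist_neq:
  assumes "j \<in> noncentral_rots"
  shows "twist j \<noteq> j"
proof
  assume "twist j = j"
  then have "(r * j) mod ordx = j mod ordx" using assms by (simp add: twist_def noncentral_rots_def)
  then have "ordx dvd (r * j - j)" by (simp add: mod_ordx_eq_iff)
  moreover have "r * j - j = (2 * int m - 2) * j" by (simp add: algebra_simps)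
  ultimately have "zstep dvd j" using ordx_dvd_mult_iff by simp
  then show False using assms by (simp add: noncentral_rots_def)
qed

lemma twist_noncentral_rots:
  assumes "j \<in> noncentral_rots"
  shows "twist j \<in> noncentral_rots"
proof -
  have "\<not> zstep dvd twist j"
  proof
    assume a: "zstep dvd twist j"
    have "r * j = ordx * ((r * j) div ordx) + twist j" by (simp add: twist_def)
    then have "zstep dvd r * j" using a zstep_dvd_ordx by (metis dvd_add dvd_mult2)
    then have "zstep dvd r * (r * j)" by simp
    moreover have "r * (r * j) = j + ordx * ((int m - 1) * j)" using r_squared by (simp add: algebra_simps)
    ultimately have "zstep dvd j + ordx * ((int m - 1) * j)" by simp
    moreover have "zstep dvd ordx * ((int m - 1) * j)" using zstep_dvd_ordx by simp
    ultimately have "zstep dvd j" using dvd_add_left_iff by blast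
    then show False using assms by (simp add: noncentral_rots_def)
  qed
  then show ?thesis using twist_range by (simp add: noncentral_rots_def)
qed

lemma rot_class_twist:
  assumes "j \<in> noncentral_rots"
  shows "rot_class (twist j) = rot_class j"
  using twist_twist[of j] assms by (auto simp: rot_class_def noncentral_rots_def)

lemma card_rot_class:
  assumes "j \<in> noncentral_rots"
  shows "card (rot_class j) = 2"
  using twist_neq[OF assms] by (auto simp: rot_class_def)

lemma rot_class_disjoint:
  assumes "j \<in> noncentral_rots" "j' \<in> noncentral_rots" "rot_class j \<noteq> rot_class j'"
  shows "rot_class j \<inter> rot_class j' = {}"
proof (rule ccontr)
  assume "rot_class j \<inter> rot_class j' \<noteq> {}"
  then obtain a where a: "a \<in> rot_class j" "a \<in> rot_class j'" by blast
  have "rot_class j = rot_class j'"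
  proof -
    consider "(j, False) = (j', False)" | "(j, False) = (twist j', False)" | "(twist j, False) = (j', False)"
      | "(twist j, False) = (twist j', False)" using a by (auto simp: rot_class_def)
    then show ?thesis
    proof cases
      case 1 then show ?thesis by simp
    next
      case 2 then have "j = twist j'" by simp
      then show ?thesis using rot_class_twist[OF assms(2)] by simp
    next
      case 3 then have "j' = twist j" by simp
      then show ?thesis using rot_class_twist[OF assms(1)] by simp
    next
      case 4 then have "twist (twist j) = twist (twist j')" by simp
      then have "j = j'" using twist_twist assms by (simp add: noncentral_rots_def)
      then show ?thesis by simp
    qed
  qed
  with assms(3) show False by simp
qed

lemma Union_rot_classes: "\<Union> rot_classes = (\<lambda>j. (j, False)) ` noncentral_rots"
  unfolding rot_classes_def rot_class_def using twist_noncentral_rots by auto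

lemma finite_noncentral_rots: "finite noncentral_rots"
  unfolding noncentral_rots_def by (rule finite_subset[of _ "{0..<ordx}"]) auto

lemma card_noncentral_rots: "card noncentral_rots = nat ordx - nat zcard"
proof -
  define Zc where "Zc = {j. 0 \<le> j \<and> j < ordx \<and> zstep dvd j}"
  have noncentral_rots: "noncentral_rots = {0..<ordx} - Zc" unfolding noncentral_rots_def Zc_def by auto
  have Zc: "Zc = (\<lambda>t. zstep * t) ` {0..<zcard}"
  proof (rule Set.set_eqI)
    fix j
    show "j \<in> Zc \<longleftrightarrow> j \<in> (\<lambda>t. zstep * t) ` {0..<zcard}"
    proof
      assume "j \<in> Zc"
      then obtain t where t: "j = zstep * t" "0 \<le> zstep * t" "zstep * t < zstep * zcard" unfolding Zc_def using ordx_eq by (auto elim!: dvdE)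
      have "0 \<le> t" using t(2) zstep_ge_2 by (simp add: zero_le_mult_iff)
      moreover have "t < zcard" using t(3) zstep_ge_2 by simp
      ultimately show "j \<in> (\<lambda>t. zstep * t) ` {0..<zcard}" using t(1) by auto
    next
      assume "j \<in> (\<lambda>t. zstep * t) ` {0..<zcard}"
      then obtain t where t1: "j = zstep * t" and t2: "t \<in> {0..<zcard}" by (rule imageE)
      then have t: "j = zstep * t" "0 \<le> t" "t < zcard" by auto
      have "zstep * t < zstep * zcard" using t zstep_ge_2 by simp
      then show "j \<in> Zc" using t zstep_ge_2 ordx_eq unfolding Zc_def by auto
    qed
  qed
  have inj: "inj_on (\<lambda>t. zstep * t) {0..<zcard}" using zstep_ge_2 by (auto simp: inj_on_def)
  have cZc: "card Zc = nat zcard" unfolding Zc using card_image[OF inj] by simp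
  have sub: "Zc \<subseteq> {0..<ordx}" unfolding Zc_def by auto
  have "card noncentral_rots = card {0..<ordx} - card Zc" unfolding noncentral_rots by (rule card_Diff_subset) (use sub in \<open>auto intro: finite_subset\<close>)
  then show ?thesis using cZc by simp
qed

lemma double_card_rot_classes: "2 * card rot_classes = nat ordx - nat zcard"
proof -
  have "2 * card rot_classes = card (\<Union> rot_classes)"
  proof (rule card_partition)
    show "finite rot_classes" unfolding rot_classes_def using finite_noncentral_rots by simp
    show "finite (\<Union> rot_classes)" unfolding Union_rot_classes using finite_noncentral_rots by simp
    show "\<And>c. c \<in> rot_classes \<Longrightarrow> card c = 2" unfolding rot_classes_def using card_rot_class by auto
    show "\<And>c1 c2. c1 \<in> rot_classes \<Longrightarrow> c2 \<in> rot_classes \<Longrightarrow> c1 \<noteq> c2 \<Longrightarrow> c1 \<inter> c2 = {}"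
      unfolding rot_classes_def using rot_class_disjoint by auto
  qed
  also have "\<dots> = card noncentral_rots" unfolding Union_rot_classes by (rule card_image) (auto simp: inj_on_def)
  finally show ?thesis using card_noncentral_rots by simp
qed

lemma refl_class_mod: "refl_class (i mod zcard) = refl_class i"
  unfolding refl_class_def by simp

lemma zcard_le_ordx: "zcard \<le> ordx"
  using m_ge_2 unfolding zcard_def by auto

lemma refl_class_self: "0 \<le> c \<Longrightarrow> c < ordx \<Longrightarrow> (c, True) \<in> refl_class c"
  unfolding refl_class_def by auto

lemma card_refl_classes: "card refl_classes = nat zcard"
proof -
  have "inj_on refl_class {0..<zcard}"
  proof (rule inj_onI)
    fix c c' assume c: "c \<in> {0..<zcard}" "c' \<in> {0..<zcard}" "refl_class c = refl_class c'"
    then have "(c, True) \<in> refl_class c'" using refl_class_self[of c] zcard_le_ordx by auto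
    then have "c mod zcard = c' mod zcard" unfolding refl_class_def by auto
    then show "c = c'" using c by simp
  qed
  then show ?thesis unfolding refl_classes_def by (simp add: card_image)
qed

lemma nccc_vertices_SD: "nccc_vertices G = refl_classes \<union> rot_classes"
proof -
  have CC: "carrier G - grp_center G = ((\<lambda>i. (i, True)) ` {0..<ordx}) \<union> ((\<lambda>j. (j, False)) ` noncentral_rots)"
    unfolding grp_center_SD carrier_SD noncentral_rots_def by auto
  have A: "conj_class G ` ((\<lambda>i. (i, True)) ` {0..<ordx}) = refl_classes"
  proof -
    have "conj_class G ` ((\<lambda>i. (i, True)) ` {0..<ordx}) = (\<lambda>i. conj_class G (i, True)) ` {0..<ordx}"
      by (simp add: image_image)
    also have "\<dots> = refl_class ` {0..<ordx}" by (rule image_cong) (auto simp: conj_class_refl)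
    also have "\<dots> = refl_class ` {0..<zcard}"
    proof
      show "refl_class ` {0..<ordx} \<subseteq> refl_class ` {0..<zcard}"
      proof
        fix X assume "X \<in> refl_class ` {0..<ordx}"
        then obtain i where "X = refl_class i" by auto
        then have "X = refl_class (i mod zcard)" by (simp add: refl_class_mod)
        moreover have "i mod zcard \<in> {0..<zcard}" using zcard_pos by simp
        ultimately show "X \<in> refl_class ` {0..<zcard}" by blast
      qed
      show "refl_class ` {0..<zcard} \<subseteq> refl_class ` {0..<ordx}" using zcard_le_ordx by auto
    qed
    finally show ?thesis unfolding refl_classes_def .
  qed
  have B: "conj_class G ` ((\<lambda>j. (j, False)) ` noncentral_rots) = rot_classes"
    unfolding rot_classes_def using conj_class_rot by (auto simp: image_iff rot_class_def twist_def noncentral_rots_def)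
  show ?thesis unfolding nccc_vertices_def CC image_Un A B ..
qed

lemma refl_classes_elem: "X \<in> refl_classes \<Longrightarrow> \<exists>c. 0 \<le> c \<and> c < ordx \<and> X = refl_class c"
  unfolding refl_classes_def using zcard_le_ordx by force

lemma rot_classes_elem: "X \<in> rot_classes \<Longrightarrow> \<exists>j. j \<in> noncentral_rots \<and> X = rot_class j"
  unfolding rot_classes_def by auto

lemma refl_rot_classes_disjoint: "refl_classes \<inter> rot_classes = {}"
proof (rule ccontr)
  assume "refl_classes \<inter> rot_classes \<noteq> {}"
  then obtain X where X: "X \<in> refl_classes" "X \<in> rot_classes" by blast
  obtain c where c: "0 \<le> c" "c < ordx" "X = refl_class c" using refl_classes_elem[OF X(1)] by blast
  obtain j where j: "j \<in> noncentral_rots" "X = rot_class j" using rot_classes_elem[OF X(2)] by blast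
  have "(c, True) \<in> rot_class j" using refl_class_self[OF c(1,2)] c j by simp
  then show False by (simp add: rot_class_def)
qed

lemma finite_nccc_vertices_SD: "finite (nccc_vertices G)"
  unfolding nccc_vertices_SD refl_classes_def rot_classes_def using finite_noncentral_rots by simp


lemma rot_classes_member: "X \<in> rot_classes \<Longrightarrow> x \<in> X \<Longrightarrow> \<exists>a. x = (a, False) \<and> a \<in> noncentral_rots"
  using Union_rot_classes by blast

lemma rot_classes_some: "X \<in> rot_classes \<Longrightarrow> \<exists>a. (a, False) \<in> X"
  unfolding rot_classes_def rot_class_def by auto

lemma refl_class_member: "x \<in> refl_class c \<Longrightarrow> \<exists>k. x = (k, True) \<and> 0 \<le> k \<and> k < ordx \<and> k mod zcard = c mod zcard"
  unfolding refl_class_def by auto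

lemma not_nccc_adj_rot_rot: "X \<in> rot_classes \<Longrightarrow> Y \<in> rot_classes \<Longrightarrow> \<not> nccc_adj G X Y"
proof -
  assume X: "X \<in> rot_classes" and Y: "Y \<in> rot_classes"
  obtain a where a: "(a, False) \<in> X" using rot_classes_some[OF X] by blast
  obtain b where b: "(b, False) \<in> Y" using rot_classes_some[OF Y] by blast
  show ?thesis unfolding nccc_adj_def using a b rot_rot_commute by blast
qed

lemma nccc_adj_rot_refl:
  assumes X: "X \<in> rot_classes" and Y: "Y \<in> refl_classes"
  shows "nccc_adj G X Y" "nccc_adj G Y X"
proof -
  have ne: "X \<noteq> Y" using refl_rot_classes_disjoint X Y by blast
  obtain c where c: "0 \<le> c" "c < ordx" "Y = refl_class c" using refl_classes_elem[OF Y] by blast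
  have nc: "x' \<otimes>\<^bsub>G\<^esub> y' \<noteq> y' \<otimes>\<^bsub>G\<^esub> x'" if xX: "x' \<in> X" and yY: "y' \<in> Y" for x' y'
  proof -
    obtain a where a: "x' = (a, False)" "a \<in> noncentral_rots" using rot_classes_member[OF X xX] by blast
    obtain k where k: "y' = (k, True)" "0 \<le> k" "k < ordx" using refl_class_member[of y' c] yY c by blast
    have "0 \<le> a" "a < ordx" "\<not> zstep dvd a" using a(2) by (auto simp: noncentral_rots_def)
    then show ?thesis using rot_refl_commute_iff[of k a] a k by auto
  qed
  show "nccc_adj G X Y" unfolding nccc_adj_def using ne nc by blast
  show "nccc_adj G Y X" unfolding nccc_adj_def using ne nc by metis
qed

lemma refl_class_eqI: "c mod zcard = c' mod zcard \<Longrightarrow> refl_class c = refl_class c'"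
  unfolding refl_class_def by simp

lemma nccc_adj_refl_refl_even:
  assumes "even m" "X \<in> refl_classes" "Y \<in> refl_classes" "X \<noteq> Y"
  shows "nccc_adj G X Y"
proof -
  obtain c where c: "X = refl_class c" using refl_classes_elem[OF assms(2)] by blast
  obtain c' where c': "Y = refl_class c'" using refl_classes_elem[OF assms(3)] by blast
  have "x' \<otimes>\<^bsub>G\<^esub> y' \<noteq> y' \<otimes>\<^bsub>G\<^esub> x'" if xX: "x' \<in> X" and yY: "y' \<in> Y" for x' y'
  proof
    assume eq: "x' \<otimes>\<^bsub>G\<^esub> y' = y' \<otimes>\<^bsub>G\<^esub> x'"
    obtain i where i: "x' = (i, True)" "i mod zcard = c mod zcard" using refl_class_member[of x' c] xX c by blast
    obtain k where k: "y' = (k, True)" "k mod zcard = c' mod zcard" using refl_class_member[of y' c'] yY c' by blast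
    have zstep_eq: "zstep = 2 * int m" using assms(1) unfolding zstep_def by simp
    have "zstep dvd (k - i)" using eq i k refl_refl_commute_iff by simp
    then have "2 * int m dvd (k - i)" unfolding zstep_eq .
    then have "2 dvd (k - i)" by (rule dvd_mult_left)
    then have "k mod 2 = i mod 2" unfolding mod_eq_dvd_iff .
    have zcard_eq: "zcard = 2" using assms(1) unfolding zcard_def by simp
    have "c mod zcard = i mod zcard" using i(2) by simp
    also have "i mod zcard = k mod zcard" using \<open>k mod 2 = i mod 2\<close> zcard_eq by simp
    also have "k mod zcard = c' mod zcard" using k(2) .
    finally have cc: "c mod zcard = c' mod zcard" .
    have "X = Y" using refl_class_eqI[OF cc] c c' by simp
    then show False using assms(4) by simp
  qed
  then show ?thesis unfolding nccc_adj_def using assms(4) by blast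
qed

lemma not_nccc_adj_refl_refl_odd:
  assumes "odd m" "X \<in> refl_classes" "Y \<in> refl_classes"
  shows "\<not> nccc_adj G X Y"
proof -
  obtain h where h: "m = 2 * h + 1" using assms(1) oddE by blast
  have zcard_zstep: "zcard = 4" "zstep = int m" using assms(1) unfolding zcard_def zstep_def by auto
  obtain c where c: "X = refl_class c" using refl_classes_elem[OF assms(2)] by blast
  obtain c' where c': "Y = refl_class c'" using refl_classes_elem[OF assms(3)] by blast
  \<comment> \<open>A \<open>k \<equiv> c' (mod 4)\<close> with \<open>k \<equiv> c0 (mod m)\<close>: \<open>k = c0 + t m\<close>, \<open>t \<equiv> (c' - c0) m (mod 4)\<close>, as \<open>m\<^sup>2 \<equiv> 1 (mod 4)\<close>.\<close>
  define c0 where "c0 = c mod 4"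
  define t where "t = ((c' - c0) * int m) mod 4"
  define u where "u = ((c' - c0) * int m) div 4"
  define k where "k = (c0 + t * int m) mod ordx"
  define w where "w = (c0 + t * int m) div ordx"
  have c0r: "0 \<le> c0" "c0 < ordx" using m_ge_2 unfolding c0_def by auto
  have x: "(c0, True) \<in> X" using c c0r zcard_zstep unfolding refl_class_def c0_def by auto
  have kr: "0 \<le> k" "k < ordx" using ordx_pos unfolding k_def by auto
  have "k mod 4 = (c0 + t * int m) mod 4" unfolding k_def
    using zcard_dvd_ordx zcard_zstep by (simp add: mod_mod_cancel)
  also have "\<dots> = c' mod 4" unfolding mod_eq_dvd_iff
  proof -
    have tu: "(c' - c0) * int m = 4 * u + t" unfolding t_def u_def by simp
    have "c0 + t * int m - c' = (c' - c0) * int m * int m - (c' - c0) - 4 * u * int m"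
      using tu by (simp add: algebra_simps)
    also have "\<dots> = 4 * ((c' - c0) * (int h * int h + int h) - u * int m)"
      using h by (simp add: algebra_simps)
    finally show "4 dvd c0 + t * int m - c'" by simp
  qed
  finally have y: "(k, True) \<in> Y" using c' kr zcard_zstep unfolding refl_class_def by auto
  have "k - c0 = int m * (t - 4 * w)"
  proof -
    have "c0 + t * int m = ordx * w + k" unfolding k_def w_def by simp
    then show ?thesis by (simp add: algebra_simps)
  qed
  then have "zstep dvd (k - c0)" using zcard_zstep by simp
  then have "(c0, True) \<otimes>\<^bsub>G\<^esub> (k, True) = (k, True) \<otimes>\<^bsub>G\<^esub> (c0, True)" using refl_refl_commute_iff by simp
  then show ?thesis unfolding nccc_adj_def using x y by blast
qed

lemma nccc_adj_SD_iff:
  assumes "X \<in> refl_classes \<union> rot_classes" "Y \<in> refl_classes \<union> rot_classes"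
  shows "nccc_adj G X Y \<longleftrightarrow> X \<noteq> Y \<and>
     (if X \<in> refl_classes \<and> Y \<in> refl_classes then even m else if X \<notin> refl_classes \<and> Y \<notin> refl_classes then False else True)"
proof (cases "X \<in> refl_classes")
  case XS: True
  show ?thesis
  proof (cases "Y \<in> refl_classes")
    case True
    show ?thesis
    proof (cases "even m")
      case True then show ?thesis using nccc_adj_refl_refl_even XS \<open>Y \<in> refl_classes\<close> by (auto simp: nccc_adj_def)
    next
      case False then show ?thesis using not_nccc_adj_refl_refl_odd XS \<open>Y \<in> refl_classes\<close> by auto
    qed
  next
    case False
    then have "Y \<in> rot_classes" using assms by auto
    then show ?thesis using nccc_adj_rot_refl(2) XS False by (auto simp: nccc_adj_def)
  qed
next
  case XT: False
  then have X: "X \<in> rot_classes" using assms by auto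
  show ?thesis
  proof (cases "Y \<in> refl_classes")
    case True
    then show ?thesis using nccc_adj_rot_refl(1)[OF X True] XT by (auto simp: nccc_adj_def)
  next
    case False
    then have "Y \<in> rot_classes" using assms by auto
    then show ?thesis using not_nccc_adj_rot_rot[OF X] XT False by auto
  qed
qed

end

section \<open>The NCCC-graph of the semidihedral group\<close>

lemma mult_sqrt_one_plus_divide:
  fixes x c :: real
  assumes "x > 0"
  shows "x * sqrt (1 + c / x) = sqrt (x * (x + c))"
proof -
  have "x * sqrt (1 + c / x) = sqrt (x\<^sup>2 * (1 + c / x))"
    using assms by (simp add: real_sqrt_mult)
  also have "x\<^sup>2 * (1 + c / x) = x * (x + c)"
    using assms by (simp add: power2_eq_square field_simps)
  finally show ?thesis .
qed

lemma sum_prod_roots_sqrt: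
  fixes a d :: real
  assumes "0 \<le> d"
  shows "(a + sqrt d) / 2 + (a - sqrt d) / 2 = a"
    and "(a + sqrt d) / 2 * ((a - sqrt d) / 2) = (a\<^sup>2 - d) / 4"
  using assms by (simp_all add: field_simps power2_eq_square)

lemma replicate_mset_add: "replicate_mset (a + b) x = replicate_mset a x + replicate_mset b x"
  by (induction a) simp_all

context semidihedral
begin

abbreviation "VG \<equiv> nccc_vertices G"
abbreviation "adjG \<equiv> nccc_adj G"

lemma nccc_vertices_minus_refl_classes: "VG - refl_classes = rot_classes"
  unfolding nccc_vertices_SD using refl_rot_classes_disjoint by blast

lemma refl_classes_nonempty: "refl_classes \<noteq> {}"
  unfolding refl_classes_def using zcard_pos by auto

lemma rot_classes_nonempty: "rot_classes \<noteq> {}"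
proof -
  have "1 \<in> noncentral_rots"
    using not_zstep_dvd_1 m_ge_2 unfolding noncentral_rots_def by auto
  then show ?thesis unfolding rot_classes_def by auto
qed

lemma card_rot_classes: "card rot_classes = (if even m then 2 * m - 1 else 2 * m - 2)"
  using double_card_rot_classes m_ge_2 unfolding zcard_def by (auto split: if_splits)

sublocale nccc: two_part_join VG refl_classes adjG "even m" False
proof
  show "finite VG" by (rule finite_nccc_vertices_SD)
  show "refl_classes \<subseteq> VG" unfolding nccc_vertices_SD by blast
  fix X Y assume "X \<in> VG" "Y \<in> VG"
  then show "adjG X Y \<longleftrightarrow> X \<noteq> Y \<and> (if X \<in> refl_classes \<and> Y \<in> refl_classes then even m
      else if X \<notin> refl_classes \<and> Y \<notin> refl_classes then False else True)"
    unfolding nccc_vertices_SD by (rule nccc_adj_SD_iff)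
qed

lemma nccc_VT_nonempty: "VG - refl_classes \<noteq> {}"
  using rot_classes_nonempty nccc_vertices_minus_refl_classes by simp

lemma nccc_parameters_even:
  assumes "even m"
  shows "card refl_classes = 2" "card (VG - refl_classes) = 2 * m - 1"
    "real (card (VG - refl_classes)) = 2 * real m - 1"
    "real nccc.deg_S = 2 * real m" "real nccc.deg_T = 2"
  using assms m_ge_2 card_refl_classes card_rot_classes
    nccc.real_deg_S[OF refl_classes_nonempty] nccc.real_deg_T[OF nccc_VT_nonempty]
  by (simp_all add: zcard_def nccc_vertices_minus_refl_classes of_nat_diff)

lemma nccc_parameters_odd:
  assumes "odd m"
  shows "m \<ge> 3" "card refl_classes = 4" "card (VG - refl_classes) = 2 * m - 2"
    "real (card (VG - refl_classes)) = 2 * real m - 2"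
    "real nccc.deg_S = 2 * real m - 2" "real nccc.deg_T = 4"
proof -
  show "m \<ge> 3" using assms m_ge_2 by (cases "m = 2") auto
  then show "card refl_classes = 4" "card (VG - refl_classes) = 2 * m - 2"
    "real (card (VG - refl_classes)) = 2 * real m - 2"
    "real nccc.deg_S = 2 * real m - 2" "real nccc.deg_T = 4"
    using assms card_refl_classes card_rot_classes
      nccc.real_deg_S[OF refl_classes_nonempty] nccc.real_deg_T[OF nccc_VT_nonempty]
    by (simp_all add: zcard_def nccc_vertices_minus_refl_classes of_nat_diff)
qed

lemma card_VG_even: "even m \<Longrightarrow> real (card VG) = 2 * real m + 1"
  using nccc.card_V nccc_parameters_even by simp

lemma card_VG_odd: "odd m \<Longrightarrow> real (card VG) = 2 * real m + 2"
  using nccc.card_V nccc_parameters_odd by simp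

lemma gspec_even:
  assumes "even m"
  shows "gspec VG adjG = replicate_mset (2*m - 2) 0 + {# -1,
          (1 + sqrt (16 * real m - 7)) / 2, (1 - sqrt (16 * real m - 7)) / 2 #}"
proof -
  note par = nccc_parameters_even[OF assms]
  have "16 * real m - 7 \<ge> 0" using m_ge_2 by simp
  note roots = sum_prod_roots_sqrt[OF this, of 1]
  have "gspec VG adjG = {#(1 + sqrt (16 * real m - 7)) / 2, (1 - sqrt (16 * real m - 7)) / 2#}
     + replicate_mset (card refl_classes - 1) (- of_bool (even m))
     + replicate_mset (card (VG - refl_classes) - 1) (- of_bool False)"
    by (rule nccc.gspec_eq) (use assms par roots refl_classes_nonempty nccc_VT_nonempty in simp_all)
  then show ?thesis
    using assms par by (simp add: numeral_eq_Suc add_mset_commute)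
qed

lemma gspec_odd:
  assumes "odd m"
  shows "gspec VG adjG = replicate_mset (2*m) 0 + {# 4 * sqrt ((real m - 1) / 2),
          - 4 * sqrt ((real m - 1) / 2) #}"
proof -
  note par = nccc_parameters_odd[OF assms]
  have "gspec VG adjG = {#4 * sqrt ((real m - 1) / 2), - 4 * sqrt ((real m - 1) / 2)#}
     + replicate_mset (card refl_classes - 1) (- of_bool (even m))
     + replicate_mset (card (VG - refl_classes) - 1) (- of_bool False)"
    by (intro nccc.gspec_eq)
      (use assms par refl_classes_nonempty nccc_VT_nonempty in \<open>simp_all add: field_simps\<close>)
  moreover have "replicate_mset (2*m) (0::real) = replicate_mset 3 0 + replicate_mset (2*m - 3) 0"
    using replicate_mset_add[of 3 "2*m - 3" "0::real"] par(1) by simp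
  ultimately show ?thesis
    using assms par by (simp add: numeral_eq_Suc)
qed

lemma lspec_even:
  assumes "even m"
  shows "lspec VG adjG = {#0#} + replicate_mset (2*m - 2) 2 + replicate_mset 2 (2 * real m + 1)"
  using nccc.lspec_eq[OF refl_classes_nonempty nccc_VT_nonempty]
    assms nccc_parameters_even[OF assms] card_VG_even[OF assms]
  by (simp add: numeral_eq_Suc add_mset_commute)

lemma lspec_odd:
  assumes "odd m"
  shows "lspec VG adjG = {#0#} + replicate_mset (2*m - 3) 4 + replicate_mset 3 (2 * (real m - 1))
          + {# 2 * (real m + 1) #}"
proof -
  have "2 * (real m - 1) = 2 * real m - 2" "2 * (real m + 1) = 2 * real m + 2"
    by simp_all
  then show ?thesis
    using nccc.lspec_eq[OF refl_classes_nonempty nccc_VT_nonempty]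
      assms nccc_parameters_odd[OF assms] card_VG_odd[OF assms]
    by (simp add: numeral_eq_Suc add_mset_commute)
qed

lemma qspec_even:
  assumes "even m"
  shows "qspec VG adjG = replicate_mset (2*m - 2) 2 + {# 2 * real m - 1,
          (2 * real m + 3 + sqrt ((2 * real m - 1) * (2 * real m + 7))) / 2,
          (2 * real m + 3 - sqrt ((2 * real m - 1) * (2 * real m + 7))) / 2 #}"
proof -
  note par = nccc_parameters_even[OF assms]
  have "(2 * real m - 1) * (2 * real m + 7) \<ge> 0" using m_ge_2 by simp
  note roots = sum_prod_roots_sqrt[OF this, of "2 * real m + 3"]
  have "(2 * real m + 3)\<^sup>2 - (2 * real m - 1) * (2 * real m + 7) = 16"
    by (simp add: power2_eq_square algebra_simps)
  then have "qspec VG adjG =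
       {#(2 * real m + 3 + sqrt ((2 * real m - 1) * (2 * real m + 7))) / 2,
         (2 * real m + 3 - sqrt ((2 * real m - 1) * (2 * real m + 7))) / 2#}
     + replicate_mset (card refl_classes - 1) (real nccc.deg_S - of_bool (even m))
     + replicate_mset (card (VG - refl_classes) - 1) (real nccc.deg_T - of_bool False)"
    by (intro nccc.qspec_eq)
      (use assms par roots refl_classes_nonempty nccc_VT_nonempty in simp_all)
  then show ?thesis
    using assms par by (simp add: numeral_eq_Suc add_mset_commute)
qed

lemma qspec_odd:
  assumes "odd m"
  shows "qspec VG adjG = lspec VG adjG"
proof -
  note par = nccc_parameters_odd[OF assms]
  have "qspec VG adjG = {#2 * real m + 2, 0#}
     + replicate_mset (card refl_classes - 1) (real nccc.deg_S - of_bool (even m))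
     + replicate_mset (card (VG - refl_classes) - 1) (real nccc.deg_T - of_bool False)"
    by (rule nccc.qspec_eq) (use assms par refl_classes_nonempty nccc_VT_nonempty in simp_all)
  then show ?thesis
    using nccc.lspec_eq[OF refl_classes_nonempty nccc_VT_nonempty] card_VG_odd[OF assms] assms par
    by simp
qed

lemma avg_deg_even: "even m \<Longrightarrow> avg_deg VG adjG = (8 * real m - 2) / (2 * real m + 1)"
  using nccc.avg_deg_eq nccc_parameters_even card_VG_even by (simp add: algebra_simps)

lemma avg_deg_odd: "odd m \<Longrightarrow> avg_deg VG adjG = (16 * real m - 16) / (2 * real m + 2)"
  using nccc.avg_deg_eq nccc_parameters_odd card_VG_odd by (simp add: algebra_simps)

lemma energy_even:
  assumes "even m"
  shows "energy VG adjG = 1 + sqrt (16 * real m - 7)"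
proof -
  have s: "sqrt (16 * real m - 7) \<ge> 1" using m_ge_2 by simp
  show ?thesis unfolding energy_def gspec_even[OF assms] using s by (simp add: field_simps)
qed

lemma avg_deg_even_bounds:
  assumes "even m"
  shows "2 \<le> avg_deg VG adjG" "avg_deg VG adjG \<le> 4" "avg_deg VG adjG \<le> 2 * real m - 1"
proof -
  have "2 \<le> real m" using m_ge_2 by simp
  moreover from this have "0 \<le> real m * (real m - 2)" by simp
  then have "8 * real m - 2 \<le> (2 * real m - 1) * (2 * real m + 1)"
    by (simp add: algebra_simps)
  ultimately show "2 \<le> avg_deg VG adjG" "avg_deg VG adjG \<le> 4" "avg_deg VG adjG \<le> 2 * real m - 1"
    unfolding avg_deg_even[OF assms] by (simp_all add: field_simps)
qed

lemma lap_energy_even: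
  assumes "even m"
  shows "lap_energy VG adjG = 4 * (2 * real m - 1) * (2 * real m - 2) / (2 * real m + 1) + 4"
proof -
  define D where "D = avg_deg VG adjG"
  note D = avg_deg_even_bounds[OF assms, folded D_def]
  have "lap_energy VG adjG
      = (\<Sum>b\<in>#{#0#} + replicate_mset (2*m - 2) 2 + replicate_mset 2 (2 * real m + 1). \<bar>b - D\<bar>)"
    unfolding lap_energy_def lspec_even[OF assms] D_def ..
  also have "\<dots> = D + (2 * real m - 2) * (D - 2) + 2 * (2 * real m + 1 - D)"
    using D m_ge_2 by (simp add: of_nat_diff)
  also have "\<dots> = (2 * real m - 3) * D + 6"
    by (simp add: algebra_simps)
  also have "\<dots> = 4 * (2 * real m - 1) * (2 * real m - 2) / (2 * real m + 1) + 4"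
    unfolding D_def avg_deg_even[OF assms] using m_ge_2
    by (simp add: field_simps; simp add: algebra_simps)
  finally show ?thesis .
qed

lemma slap_energy_even:
  assumes "even m"
  shows "slap_energy VG adjG = 4 * (2 * real m - 1) * (2 * real m - 2) / (2 * real m + 1)
          + (2 * real m - 1) * (sqrt (1 + 8 / (2 * real m - 1)) - 1)"
proof -
  define D where "D = avg_deg VG adjG"
  define R where "R = sqrt ((2 * real m - 1) * (2 * real m + 7))"
  note D = avg_deg_even_bounds[OF assms, folded D_def]
  have mr: "real m \<ge> 2" using m_ge_2 by simp
  have "sqrt ((2 * real m - 1)\<^sup>2) \<le> R"
    unfolding R_def using mr by (intro real_sqrt_le_mono) (simp add: power2_eq_square)
  then have R: "R \<ge> 2 * real m - 1"
    using mr by simp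
  have "slap_energy VG adjG = (\<Sum>b\<in>#replicate_mset (2*m - 2) 2
      + {# 2 * real m - 1, (2 * real m + 3 + R) / 2, (2 * real m + 3 - R) / 2 #}. \<bar>b - D\<bar>)"
    unfolding slap_energy_def qspec_even[OF assms] D_def R_def ..
  also have "\<dots> = real (2*m - 2) * \<bar>2 - D\<bar> + (\<bar>2 * real m - 1 - D\<bar>
      + (\<bar>(2 * real m + 3 + R) / 2 - D\<bar> + \<bar>(2 * real m + 3 - R) / 2 - D\<bar>))"
    by simp
  also have "\<dots> = (2 * real m - 2) * (D - 2) + (2 * real m - 1 - D)
      + ((2 * real m + 3 + R) / 2 - D) + (D - (2 * real m + 3 - R) / 2)"
  proof -
    have "\<bar>2 - D\<bar> = D - 2" "\<bar>2 * real m - 1 - D\<bar> = 2 * real m - 1 - D"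
      "\<bar>(2 * real m + 3 + R) / 2 - D\<bar> = (2 * real m + 3 + R) / 2 - D"
      "\<bar>(2 * real m + 3 - R) / 2 - D\<bar> = D - (2 * real m + 3 - R) / 2"
      using D R mr by simp_all
    then show ?thesis using m_ge_2 by (simp add: of_nat_diff)
  qed
  also have "\<dots> = (2 * real m - 3) * D - 2 * real m + 3 + R"
    by (simp add: field_simps)
  also have "R = (2 * real m - 1) * sqrt (1 + 8 / (2 * real m - 1))"
    unfolding R_def using mr by (simp add: mult_sqrt_one_plus_divide)
  also have "(2 * real m - 3) * D - 2 * real m + 3 + (2 * real m - 1) * sqrt (1 + 8 / (2 * real m - 1))
      = 4 * (2 * real m - 1) * (2 * real m - 2) / (2 * real m + 1)
        + (2 * real m - 1) * (sqrt (1 + 8 / (2 * real m - 1)) - 1)"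
    unfolding D_def avg_deg_even[OF assms] using mr
    by (simp add: field_simps; simp add: algebra_simps)
  finally show ?thesis .
qed

lemma energy_odd:
  assumes "odd m"
  shows "energy VG adjG = 8 * sqrt ((real m - 1) / 2)"
  unfolding energy_def gspec_odd[OF assms] using m_ge_2 by simp

lemma avg_deg_odd_bounds:
  assumes "odd m"
  shows "4 \<le> avg_deg VG adjG" "avg_deg VG adjG \<le> 2 * (real m - 1)"
proof -
  have "3 \<le> real m" using nccc_parameters_odd(1)[OF assms] by simp
  moreover from this have "0 \<le> (2 * real m - 2) * (2 * real m - 6)" by simp
  then have "16 * real m - 16 \<le> 2 * (real m - 1) * (2 * real m + 2)"
    by (simp add: algebra_simps)
  ultimately show "4 \<le> avg_deg VG adjG" "avg_deg VG adjG \<le> 2 * (real m - 1)"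
    unfolding avg_deg_odd[OF assms] by (simp_all add: field_simps)
qed

lemma lap_energy_odd:
  assumes "odd m"
  shows "lap_energy VG adjG = 16 * (real m - 1) * (real m - 3) / (real m + 1) + 8"
proof -
  define D where "D = avg_deg VG adjG"
  note D = avg_deg_odd_bounds[OF assms, folded D_def]
  have m3: "m \<ge> 3" by (rule nccc_parameters_odd(1)[OF assms])
  have "lap_energy VG adjG = (\<Sum>b\<in>#{#0#} + replicate_mset (2*m - 3) 4
      + replicate_mset 3 (2 * (real m - 1)) + {# 2 * (real m + 1) #}. \<bar>b - D\<bar>)"
    unfolding lap_energy_def lspec_odd[OF assms] D_def ..
  also have "\<dots> = D + (2 * real m - 3) * (D - 4) + 3 * (2 * (real m - 1) - D) + (2 * (real m + 1) - D)"
    using D m3 by (simp add: of_nat_diff)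
  also have "\<dots> = (2 * real m - 6) * D + 8"
    by (simp add: algebra_simps)
  also have "\<dots> = 16 * (real m - 1) * (real m - 3) / (real m + 1) + 8"
    unfolding D_def avg_deg_odd[OF assms] using m3
    by (simp add: field_simps; simp add: algebra_simps)
  finally show ?thesis .
qed

lemma slap_energy_odd: "odd m \<Longrightarrow> slap_energy VG adjG = lap_energy VG adjG"
  unfolding slap_energy_def lap_energy_def by (simp add: qspec_odd)

end

theorem corollary2p10:
  fixes m :: nat
  assumes "m \<ge> 2"
  defines "V \<equiv> nccc_vertices (SD m)" and "adj \<equiv> nccc_adj (SD m)"
  shows
   "(even m \<longrightarrow>
      gspec V adj = replicate_mset (2*m - 2) 0 + {# -1,
          (1 + sqrt (16 * real m - 7)) / 2, (1 - sqrt (16 * real m - 7)) / 2 #}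
    \<and> energy V adj = 1 + sqrt (16 * real m - 7)
    \<and> lspec V adj = {#0#} + replicate_mset (2*m - 2) 2 + replicate_mset 2 (2 * real m + 1)
    \<and> lap_energy V adj = 4 * (2 * real m - 1) * (2 * real m - 2) / (2 * real m + 1) + 4
    \<and> qspec V adj = replicate_mset (2*m - 2) 2 + {# 2 * real m - 1,
          (2 * real m + 3 + sqrt ((2 * real m - 1) * (2 * real m + 7))) / 2,
          (2 * real m + 3 - sqrt ((2 * real m - 1) * (2 * real m + 7))) / 2 #}
    \<and> slap_energy V adj = 4 * (2 * real m - 1) * (2 * real m - 2) / (2 * real m + 1)
          + (2 * real m - 1) * (sqrt (1 + 8 / (2 * real m - 1)) - 1))
  \<and> (odd m \<longrightarrow>
      gspec V adj = replicate_mset (2*m) 0 + {# 4 * sqrt ((real m - 1) / 2),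
          - 4 * sqrt ((real m - 1) / 2) #}
    \<and> energy V adj = 8 * sqrt ((real m - 1) / 2)
    \<and> lspec V adj = {#0#} + replicate_mset (2*m - 3) 4 + replicate_mset 3 (2 * (real m - 1))
          + {# 2 * (real m + 1) #}
    \<and> qspec V adj = lspec V adj
    \<and> lap_energy V adj = 16 * (real m - 1) * (real m - 3) / (real m + 1) + 8
    \<and> slap_energy V adj = lap_energy V adj)"
proof -
  interpret semidihedral m by unfold_locales (rule assms(1))
  show ?thesis unfolding V_def adj_def
    by (simp add: gspec_even energy_even lspec_even lap_energy_even qspec_even slap_energy_even
      gspec_odd energy_odd lspec_odd qspec_odd lap_energy_odd slap_energy_odd)
qed

end
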